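(* Let $r_1,r_2,r_3,L,M>0$ with $r_2>\max(r_1,r_3)$, and let $\lambda_1,F,\varphi_1$ be as in the context. Let $c_A>2\sqrt{-\lambda_1}$, let $B,\tau\ge0$ and $T>0$, and let $A\in\mathcal C(\mathbb{R},[0,+\infty))$ with $A(t)=c_A(t-\tau)+B$ for $t\in[\tau,\tau+T)$. Let $r(t,x)=r_1$ if $x<A(t)$, $r_2$ if $A(t)\le x<A(t)+L$, $r_3$ if $x\ge A(t)+L$, and let $f$ be globally bounded in $(t,x)$, $\mathcal C^2$ in $u$, with $f(t,x,0)=0$, $\partial_uf(t,x,0)=r(t,x)$, $r(t,x)u\ge f(t,x,u)\ge r(t,x)u-Mu^2$ for $u\ge0$, $f(t,x,u)<0$ for $u>1$. Let $c=F(c_A)$ if $c_A<2\sqrt{r_1}+2\sqrt{-\lambda_1-r_1}$ and $c=2\sqrt{r_1}$ otherwise, $\lambda(c)=\frac12(c-\sqrt{c^2-4r_1})$, and $$\overline{u}(t,x)=\begin{cases}2 & x\le ct-\frac{\ln2}{\lambda(c)},\\ e^{-\lambda(c)(x-ct)} & ct-\frac{\ln2}{\lambda(c)}<x<c_At,\\ e^{-\lambda(c)(c_A-c)t}e^{-\frac{c_A(x-c_At)}{2}}\varphi_1\big(\frac{x-c_At}{L}\big) & x\ge c_At.\end{cases}$$ Then for every constant $C\ge1$, $(t,x)\mapsto C\overline{u}(t-\tau,x-B)$ is a (generalized) super-solution of $\partial_tu=\partial_{xx}u+f(t,x,u)$ for $t\in[\tau,\tau+T)$, $x\in\mathbb{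R}$.
   Context: $\underline{L}=0$ if $r_1=r_3$, otherwise $\underline{L}=\frac{1}{\sqrt{r_2-\max(r_1,r_3)}}\operatorname{arccot}\big(\sqrt{\frac{r_2-\max(r_1,r_3)}{|r_1-r_3|}}\big)$. $\lambda_1=-\max(r_1,r_3)$ if $L\le\underline{L}$; if $L>\underline{L}$, $\lambda_1$ is the unique solution in $(-r_2,\min(-\max(r_1,r_3),\pi^2/L^2-r_2))$ of $\cot(L\sqrt{r_2+\lambda_1})=\frac{r_2+\lambda_1-\sqrt{(r_1+\lambda_1)(r_3+\lambda_1)}}{\sqrt{r_2+\lambda_1}(\sqrt{-r_1-\lambda_1}+\sqrt{-r_3-\lambda_1})}$. $F(c)=\frac{c-2\sqrt{-\lambda_1-r_1}}{2}+\frac{2r_1}{c-2\sqrt{-\lambda_1-r_1}}$. $\varphi_1$ (normalized by $\varphi_1(0)=1$): (1) if $L>\underline{L}$, with $C_3\in(0,\pi/2)$, $\cot C_3=\sqrt{(-r_1-\lambda_1)/(r_2+\lambda_1)}$: $\varphi_1(y)=e^{L\sqrt{-r_1-\lambda_1}y}$ ($y\le0$), $\sin(L\sqrt{r_2+\lambda_1}y+C_3)/\sin C_3$ ($0<y<1$), $\frac{\sin(L\sqrt{r_2+\lambda_1}+C_3)}{\sin C_3}e^{-L\sqrt{-r_3-\lambda_1}(y-1)}$ ($y\ge1$); (2) if $r_1<r_3$, $L\le\underline{L}$, with $C_3\in(0,\pi/2)$, $\cot C_3=\sqrt{(r_3-r_1)/(r_2-r_3)}$: $\varphi_1(y)=e^{L\sqrt{r_3-r_1}y}$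 ($y\le0$), $\sin(L\sqrt{r_2-r_3}y+C_3)/\sin C_3$ ($0<y<1$), $\frac{\sin(L\sqrt{r_2-r_3}+C_3)+\sqrt{r_2-r_3}\cos(L\sqrt{r_2-r_3}+C_3)L(y-1)}{\sin C_3}$ ($y\ge1$); (3) if $r_1>r_3$, $L\le\underline{L}$: $\varphi_1(y)=\psi(1-y)/\psi(1)$ with $\psi$ the function of case (2) with $r_1,r_3$ interchanged. A (generalized) super-solution is a continuous, piecewise smooth function satisfying $\partial_t\overline u\ge\partial_{xx}\overline u+f(t,x,\overline u)$ in each smoothness region and $\partial_x\overline u(t,x^-)\ge\partial_x\overline u(t,x^+)$ across interfaces. *)

theory Defs
  imports "HOL-Analysis.Analysis"
begin

definition arccot :: "real \<Rightarrow> real" where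
  "arccot x = pi / 2 - arctan x"

definition Lbar :: "real \<Rightarrow> real \<Rightarrow> real \<Rightarrow> real" where
  "Lbar r1 r2 r3 = (if r1 = r3 then 0 else
     1 / sqrt (r2 - max r1 r3) * arccot (sqrt ((r2 - max r1 r3) / \<bar>r1 - r3\<bar>)))"

definition lambda1 :: "real \<Rightarrow> real \<Rightarrow> real \<Rightarrow> real \<Rightarrow> real" where
  "lambda1 r1 r2 r3 L = (if L \<le> Lbar r1 r2 r3 then - max r1 r3 else
     (THE l. - r2 < l \<and> l < min (- max r1 r3) (pi ^ 2 / L ^ 2 - r2) \<and>
        cot (L * sqrt (r2 + l)) =
          (r2 + l - sqrt ((r1 + l) * (r3 + l))) /
          (sqrt (r2 + l) * (sqrt (- r1 - l) + sqrt (- r3 - l)))))"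

definition Ffun :: "real \<Rightarrow> real \<Rightarrow> real \<Rightarrow> real \<Rightarrow> real \<Rightarrow> real" where
  "Ffun r1 r2 r3 L c =
     (c - 2 * sqrt (- lambda1 r1 r2 r3 L - r1)) / 2
     + 2 * r1 / (c - 2 * sqrt (- lambda1 r1 r2 r3 L - r1))"

definition C3_of :: "real \<Rightarrow> real" where
  "C3_of s = (THE C. 0 < C \<and> C < pi / 2 \<and> cot C = s)"

definition phi_case1 :: "real \<Rightarrow> real \<Rightarrow> real \<Rightarrow> real \<Rightarrow> real \<Rightarrow> real" where
  "phi_case1 r1 r2 r3 L y =
     (let l = lambda1 r1 r2 r3 L;
          C3 = C3_of (sqrt ((- r1 - l) / (r2 + l)))
      in if y \<le> 0 then exp (L * sqrt (- r1 - l) * y)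
         else if y < 1 then sin (L * sqrt (r2 + l) * y + C3) / sin C3
         else sin (L * sqrt (r2 + l) + C3) / sin C3 * exp (- L * sqrt (- r3 - l) * (y - 1)))"

definition phi_case2 :: "real \<Rightarrow> real \<Rightarrow> real \<Rightarrow> real \<Rightarrow> real \<Rightarrow> real" where
  "phi_case2 r1 r2 r3 L y =
     (let C3 = C3_of (sqrt ((r3 - r1) / (r2 - r3)))
      in if y \<le> 0 then exp (L * sqrt (r3 - r1) * y)
         else if y < 1 then sin (L * sqrt (r2 - r3) * y + C3) / sin C3
         else (sin (L * sqrt (r2 - r3) + C3)
               + sqrt (r2 - r3) * cos (L * sqrt (r2 - r3) + C3) * L * (y - 1)) / sin C3)"

text \<open>phi_1, normalized by phi_1(0) = 1. (When r1 = r3, Lbar = 0 < L, so case (1) applies.)\<close>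
definition phi1 :: "real \<Rightarrow> real \<Rightarrow> real \<Rightarrow> real \<Rightarrow> real \<Rightarrow> real" where
  "phi1 r1 r2 r3 L y =
     (if Lbar r1 r2 r3 < L then phi_case1 r1 r2 r3 L y
      else if r1 < r3 then phi_case2 r1 r2 r3 L y
      else phi_case2 r3 r2 r1 L (1 - y) / phi_case2 r3 r2 r1 L 1)"

definition speed_c :: "real \<Rightarrow> real \<Rightarrow> real \<Rightarrow> real \<Rightarrow> real \<Rightarrow> real" where
  "speed_c r1 r2 r3 L cA =
     (if cA < 2 * sqrt r1 + 2 * sqrt (- lambda1 r1 r2 r3 L - r1)
      then Ffun r1 r2 r3 L cA else 2 * sqrt r1)"

definition lam :: "real \<Rightarrow> real \<Rightarrow> real" where
  "lam r1 c = (c - sqrt (c ^ 2 - 4 * r1)) / 2"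

definition ubar :: "real \<Rightarrow> real \<Rightarrow> real \<Rightarrow> real \<Rightarrow> real \<Rightarrow> real \<Rightarrow> real \<Rightarrow> real" where
  "ubar r1 r2 r3 L cA t x =
     (let c = speed_c r1 r2 r3 L cA; lc = lam r1 c
      in if x \<le> c * t - ln 2 / lc then 2
         else if x < cA * t then exp (- lc * (x - c * t))
         else exp (- lc * (cA - c) * t) * exp (- (cA * (x - cA * t)) / 2)
              * phi1 r1 r2 r3 L ((x - cA * t) / L))"

definition gen_supersolution ::
  "(real \<Rightarrow> real \<Rightarrow> real \<Rightarrow> real) \<Rightarrow> real \<Rightarrow> real \<Rightarrow> (real \<Rightarrow> real \<Rightarrow> real) \<Rightarrow> bool" where
  "gen_supersolution f tau T U \<longleftrightarrow>
     continuous_on ({tau..<tau + T} \<times> UNIV) (\<lambda>(t, x). U t x) \<and>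
     (\<exists>S :: (real \<Rightarrow> real) set. finite S \<and>
        (\<forall>\<gamma>\<in>S. continuous_on {tau..<tau + T} \<gamma>) \<and>
        (\<forall>t\<in>{tau..<tau + T}. \<forall>x. (\<forall>\<gamma>\<in>S. x \<noteq> \<gamma> t) \<longrightarrow>
           (\<exists>e>0. \<exists>Ux. \<exists>Ut Uxx.
              (\<forall>y\<in>ball x e. ((\<lambda>z. U t z) has_real_derivative Ux y) (at y)) \<and>
              (Ux has_real_derivative Uxx) (at x) \<and>
              ((\<lambda>s. U s x) has_real_derivative Ut) (at t within {tau..<tau + T}) \<and>
              Ut \<ge> Uxx + f t x (U t x))) \<and>
        (\<forall>t\<in>{tau..<tau + T}. \<forall>\<gamma>\<in>S.
           (\<exists>dl dr. ((\<lambda>z. U t z) has_real_derivative dl) (at_left (\<gamma> t)) \<and>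
                    ((\<lambda>z. U t z) has_real_derivative dr) (at_right (\<gamma> t)) \<and>
                    dl \<ge> dr)))"

end

(* The candidate is glued from four pieces along the interfaces x = c t - ln 2 / lam(c),
   x = cA t and x = cA t + L (in the shifted variables).  The constant 2 is a super-solution
   because f(u) < 0 for u > 1; the exponential exp (- lam(c) (x - c t)) is one because
   lam(c)^2 - c lam(c) + r1 <= 0 and f(u) <= r u; the last piece is one because phi1 solves
   phi'' = - L^2 (r + lambda1) phi on each side of y = 1 and lam(c) (cA - c) <= cA^2/4 + lambda1.
   Across the interfaces the slope can only drop: the plateau meets a decreasing exponential,
   at x = cA t one has phi1'(0) / L <= cA/2 - lam(c), and at x = cA t + L the profile is C^1.
   The real work lies in making lambda1 and phi1 explicit: for L > Lbar the equation defining
   lambda1 has exactly one root, because its two sides are strictly monotone in opposite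
   directions and its cleared-denominator form changes sign, and in each of the three cases
   phi1 is an explicit sine/exponential (or sine/affine) profile. *)

theory Submission
  imports Defs
begin

definition super_at ::
  "(real \<Rightarrow> real \<Rightarrow> real \<Rightarrow> real) \<Rightarrow> real set \<Rightarrow> (real \<Rightarrow> real \<Rightarrow> real) \<Rightarrow> real \<Rightarrow> real \<Rightarrow> bool" where
  "super_at f I U t x \<longleftrightarrow>
     (\<exists>e>0. \<exists>Ux Ut Uxx.
        (\<forall>y\<in>ball x e. ((\<lambda>z. U t z) has_real_derivative Ux y) (at y)) \<and>
        (Ux has_real_derivative Uxx) (at x) \<and>
        ((\<lambda>s. U s x) has_real_derivative Ut) (at t within I) \<and>
        Ut \<ge> Uxx + f t x (U t x))"

definition slope_drop :: "(real \<Rightarrow> real) \<Rightarrow> real \<Rightarrow> bool" where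
  "slope_drop g a \<longleftrightarrow>
     (\<exists>dl dr. (g has_real_derivative dl) (at_left a) \<and> (g has_real_derivative dr) (at_right a) \<and>
        dl \<ge> dr)"

lemma gen_supersolutionI:
  assumes "continuous_on ({tau..<tau + T} \<times> UNIV) (\<lambda>(t, x). U t x)"
    and "finite S" and "\<And>\<gamma>. \<gamma> \<in> S \<Longrightarrow> continuous_on {tau..<tau + T} \<gamma>"
    and "\<And>t x. t \<in> {tau..<tau + T} \<Longrightarrow> (\<And>\<gamma>. \<gamma> \<in> S \<Longrightarrow> x \<noteq> \<gamma> t) \<Longrightarrow>
           super_at f {tau..<tau + T} U t x"
    and "\<And>t \<gamma>. t \<in> {tau..<tau + T} \<Longrightarrow> \<gamma> \<in> S \<Longrightarrow> slope_drop (U t) (\<gamma> t)"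
  shows "gen_supersolution f tau T U"
  using assms unfolding gen_supersolution_def super_at_def[symmetric] slope_drop_def[symmetric] by auto

lemma super_at_if_eq_on_open:
  assumes W: "open W" "(t, x) \<in> W" and U_eq: "\<And>s y. (s, y) \<in> W \<Longrightarrow> U s y = G s y"
    and Gx: "\<And>y. ((\<lambda>z. G t z) has_real_derivative Gx y) (at y)"
    and Gxx: "(Gx has_real_derivative Gxx) (at x)"
    and Gt: "((\<lambda>s. G s x) has_real_derivative Gt) (at t)"
    and ineq: "Gt \<ge> Gxx + f t x (G t x)"
  shows "super_at f I U t x"
proof -
  obtain e where e: "e > 0" "ball (t, x) e \<subseteq> W" using W open_contains_ball by blast
  have "open ((\<lambda>z. (t, z)) -` W)" "open ((\<lambda>s. (s, x)) -` W)"
    by (intro continuous_open_vimage W(1) continuous_intros)+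
  then have open_x: "open {z. (t, z) \<in> W}" and open_t: "open {s. (s, x) \<in> W}"
    by (simp_all add: vimage_def)
  have "((\<lambda>z. U t z) has_real_derivative Gx y) (at y)" if "y \<in> ball x e" for y
  proof (rule has_field_derivative_transform_within_open[OF Gx open_x])
    show "y \<in> {z. (t, z) \<in> W}" using that e by (auto simp: dist_Pair_Pair dist_commute)
  qed (simp add: U_eq)
  moreover have "((\<lambda>s. U s x) has_real_derivative Gt) (at t)"
    by (rule has_field_derivative_transform_within_open[OF Gt open_t]) (use W U_eq in auto)
  then have "((\<lambda>s. U s x) has_real_derivative Gt) (at t within I)"
    by (rule has_field_derivative_at_within)
  ultimately show ?thesis
    unfolding super_at_def using e(1) Gxx ineq U_eq[OF W(2)] by (intro exI[of _ e] exI conjI) auto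
qed

lemma slope_drop_glue:
  fixes g Gl Gr :: "real \<Rightarrow> real"
  assumes Gl: "(Gl has_real_derivative Dl) (at a)" and Gr: "(Gr has_real_derivative Dr) (at a)"
    and "Dr \<le> Dl" and d: "0 < d"
    and left: "\<And>z. a - d < z \<Longrightarrow> z \<le> a \<Longrightarrow> g z = Gl z"
    and right: "\<And>z. a \<le> z \<Longrightarrow> z < a + d \<Longrightarrow> g z = Gr z"
  shows "slope_drop g a"
proof -
  have "(g has_real_derivative Dl) (at a within {..a})"
    by (rule has_field_derivative_transform_within[OF has_field_derivative_at_within[OF Gl] d])
       (auto simp: dist_real_def left)
  then have "(g has_real_derivative Dl) (at_left a)"
    by (rule has_field_derivative_subset) auto
  moreover have "(g has_real_derivative Dr) (at a within {a..})"
    by (rule has_field_derivative_transform_within[OF has_field_derivative_at_within[OF Gr] d])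
       (auto simp: dist_real_def right)
  then have "(g has_real_derivative Dr) (at_right a)"
    by (rule has_field_derivative_subset) auto
  ultimately show ?thesis unfolding slope_drop_def using \<open>Dr \<le> Dl\<close> by blast
qed

definition solves_ode2 :: "(real \<Rightarrow> real) \<Rightarrow> (real \<Rightarrow> real) \<Rightarrow> real \<Rightarrow> bool" where
  "solves_ode2 g g' \<kappa> \<longleftrightarrow>
     (\<forall>w. (g has_real_derivative g' w) (at w)) \<and> (\<forall>w. (g' has_real_derivative \<kappa> * g w) (at w))"

lemma solves_ode2_sin:
  "solves_ode2 (\<lambda>w. a * sin (k * w + b)) (\<lambda>w. a * k * cos (k * w + b)) (- k\<^sup>2)"
  unfolding solves_ode2_def
  by (auto intro!: derivative_eq_intros simp: power2_eq_square)

lemma solves_ode2_exp: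
  "solves_ode2 (\<lambda>w. a * exp (q * (w - w0))) (\<lambda>w. a * q * exp (q * (w - w0))) (q\<^sup>2)"
  unfolding solves_ode2_def
  by (auto intro!: derivative_eq_intros simp: power2_eq_square)

lemma solves_ode2_affine: "solves_ode2 (\<lambda>w. a + b * (w - w0)) (\<lambda>_. b) 0"
  unfolding solves_ode2_def
  by (auto intro!: derivative_eq_intros)

lemma solves_ode2_continuous_on: "solves_ode2 g g' \<kappa> \<Longrightarrow> continuous_on S g"
  unfolding solves_ode2_def
  by (meson DERIV_isCont continuous_at_imp_continuous_on)

text \<open>\<open>ubar\<close> with \<open>phi1 (w / L)\<close> replaced by \<open>g1 w\<close> for \<open>0 \<le> w < L\<close> and by \<open>g2 w\<close> for
  \<open>w \<ge> L\<close>, where \<open>w = x - cA * t\<close>; \<open>lc\<close> plays the role of \<open>lam r1 c\<close>.\<close>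
definition front ::
  "real \<Rightarrow> real \<Rightarrow> real \<Rightarrow> (real \<Rightarrow> real) \<Rightarrow> (real \<Rightarrow> real) \<Rightarrow> real \<Rightarrow> real \<Rightarrow> real \<Rightarrow> real" where
  "front c cA lc g1 g2 L t x =
     (if x \<le> c * t - ln 2 / lc then 2
      else if x < cA * t then exp (- lc * (x - c * t))
      else exp (- lc * (cA - c) * t) * exp (- (cA * (x - cA * t)) / 2)
           * (if x - cA * t < L then g1 (x - cA * t) else g2 (x - cA * t)))"

definition junction_profile ::
  "real \<Rightarrow> real \<Rightarrow> real \<Rightarrow> real \<Rightarrow>
   (real \<Rightarrow> real) \<Rightarrow> (real \<Rightarrow> real) \<Rightarrow> (real \<Rightarrow> real) \<Rightarrow> (real \<Rightarrow> real) \<Rightarrow> bool" where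
  "junction_profile r2 r3 l L g1 g1' g2 g2' \<longleftrightarrow>
     solves_ode2 g1 g1' (- (r2 + l)) \<and> solves_ode2 g2 g2' (- (r3 + l)) \<and>
     g1 0 = 1 \<and> (\<forall>w. 0 \<le> w \<and> w \<le> L \<longrightarrow> 0 \<le> g1 w) \<and> (\<forall>w\<ge>L. 0 \<le> g2 w) \<and>
     g1 L = g2 L \<and> g2' L \<le> g1' L"

locale front_supersolution =
  fixes r1 r2 r3 l L c cA lc C tau B :: real and g1 g1' g2 g2' :: "real \<Rightarrow> real"
  assumes L_pos: "0 < L" and C_ge_1: "1 \<le> C"
    and lc_pos: "0 < lc" and lc_sq_le: "lc\<^sup>2 + r1 \<le> lc * c" and c_le_cA: "c \<le> cA"
    and decay_le: "lc * (cA - c) \<le> cA\<^sup>2 / 4 + l" and slope_0: "g1' 0 \<le> cA / 2 - lc"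
    and profile: "junction_profile r2 r3 l L g1 g1' g2 g2'"
begin

lemma ode1: "solves_ode2 g1 g1' (- (r2 + l))"
  and ode2: "solves_ode2 g2 g2' (- (r3 + l))"
  and g1_0: "g1 0 = 1"
  and g1_nonneg: "0 \<le> w \<Longrightarrow> w \<le> L \<Longrightarrow> 0 \<le> g1 w"
  and g2_nonneg: "L \<le> w \<Longrightarrow> 0 \<le> g2 w"
  and g_L: "g1 L = g2 L"
  and g'_L: "g2' L \<le> g1' L"
  using profile unfolding junction_profile_def by auto

definition U :: "real \<Rightarrow> real \<Rightarrow> real" where
  "U t x = C * front c cA lc g1 g2 L (t - tau) (x - B)"

definition \<gamma>1 :: "real \<Rightarrow> real" where "\<gamma>1 t = B + c * (t - tau) - ln 2 / lc"
definition \<gamma>2 :: "real \<Rightarrow> real" where "\<gamma>2 t = B + cA * (t - tau)"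
definition \<gamma>3 :: "real \<Rightarrow> real" where "\<gamma>3 t = \<gamma>2 t + L"

definition E :: "real \<Rightarrow> real \<Rightarrow> real" where "E t x = C * exp (- lc * (x - B - c * (t - tau)))"
definition K :: "real \<Rightarrow> real" where "K t = C * exp (- lc * (cA - c) * (t - tau))"
definition H :: "(real \<Rightarrow> real) \<Rightarrow> real \<Rightarrow> real \<Rightarrow> real" where
  "H g t x = K t * exp (- cA * (x - \<gamma>2 t) / 2) * g (x - \<gamma>2 t)"
definition Hx :: "(real \<Rightarrow> real) \<Rightarrow> (real \<Rightarrow> real) \<Rightarrow> real \<Rightarrow> real \<Rightarrow> real" where
  "Hx g g' t x = K t * exp (- cA * (x - \<gamma>2 t) / 2) * (g' (x - \<gamma>2 t) - cA / 2 * g (x - \<gamma>2 t))"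

lemma \<gamma>1_less_\<gamma>2: "tau \<le> t \<Longrightarrow> \<gamma>1 t < \<gamma>2 t"
proof -
  assume "tau \<le> t"
  then have "c * (t - tau) \<le> cA * (t - tau)" using c_le_cA by (intro mult_right_mono) auto
  moreover have "0 < ln 2 / lc" using lc_pos by simp
  ultimately show ?thesis unfolding \<gamma>1_def \<gamma>2_def by linarith
qed

lemma \<gamma>2_less_\<gamma>3: "\<gamma>2 t < \<gamma>3 t"
  unfolding \<gamma>3_def using L_pos by simp

lemma E_pos: "0 < E t x" and K_pos: "0 < K t"
  unfolding E_def K_def using C_ge_1 by auto

lemma U_left: "x \<le> \<gamma>1 t \<Longrightarrow> U t x = 2 * C"
  unfolding U_def front_def \<gamma>1_def by (simp add: algebra_simps)

lemma U_mid: "\<gamma>1 t < x \<Longrightarrow> x < \<gamma>2 t \<Longrightarrow> U t x = E t x"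
  unfolding U_def front_def \<gamma>1_def \<gamma>2_def E_def by (simp add: algebra_simps)

lemma U_inner: "\<gamma>1 t < x \<Longrightarrow> \<gamma>2 t \<le> x \<Longrightarrow> x < \<gamma>3 t \<Longrightarrow> U t x = H g1 t x"
  unfolding U_def front_def \<gamma>1_def \<gamma>3_def \<gamma>2_def H_def K_def by (simp add: algebra_simps)

lemma U_outer: "\<gamma>1 t < x \<Longrightarrow> \<gamma>3 t \<le> x \<Longrightarrow> U t x = H g2 t x"
  using L_pos unfolding U_def front_def \<gamma>1_def \<gamma>3_def \<gamma>2_def H_def K_def by (simp add: algebra_simps)

lemma E_at_\<gamma>1: "E t (\<gamma>1 t) = 2 * C"
  unfolding E_def \<gamma>1_def using lc_pos by (simp add: algebra_simps)

lemma E_at_\<gamma>2: "E t (\<gamma>2 t) = K t"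
  unfolding E_def K_def \<gamma>2_def by (simp add: algebra_simps)

lemma H_at_\<gamma>2: "H g1 t (\<gamma>2 t) = K t"
  unfolding H_def by (simp add: g1_0)

lemma H_at_\<gamma>3: "H g1 t (\<gamma>3 t) = H g2 t (\<gamma>3 t)"
  unfolding H_def \<gamma>3_def by (simp add: g_L)

lemma E_deriv_x: "((\<lambda>z. E t z) has_real_derivative - lc * E t y) (at y)"
  and E_deriv_xx: "((\<lambda>z. - lc * E t z) has_real_derivative lc\<^sup>2 * E t y) (at y)"
  and E_deriv_t: "((\<lambda>s. E s x) has_real_derivative lc * c * E t x) (at t)"
  unfolding E_def by (auto intro!: derivative_eq_intros simp: power2_eq_square)

lemma H_deriv_x:
  assumes "solves_ode2 g g' \<kappa>"
  shows "((\<lambda>z. H g t z) has_real_derivative Hx g g' t y) (at y)"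
proof -
  have g: "(g has_real_derivative g' w) (at w)" for w using assms by (simp add: solves_ode2_def)
  show ?thesis unfolding H_def Hx_def
    by (auto intro!: derivative_eq_intros DERIV_chain2[OF g] simp: algebra_simps)
qed

lemma H_deriv_xx:
  assumes "solves_ode2 g g' \<kappa>"
  shows "((\<lambda>z. Hx g g' t z) has_real_derivative
           K t * exp (- cA * (x - \<gamma>2 t) / 2) *
           ((\<kappa> + cA\<^sup>2 / 4) * g (x - \<gamma>2 t) - cA * g' (x - \<gamma>2 t))) (at x)"
proof -
  have g: "(g has_real_derivative g' w) (at w)" and g': "(g' has_real_derivative \<kappa> * g w) (at w)" for w
    using assms by (simp_all add: solves_ode2_def)
  show ?thesis unfolding Hx_def
    by (auto intro!: derivative_eq_intros DERIV_chain2[OF g] DERIV_chain2[OF g']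
        simp: field_simps power2_eq_square)
qed

lemma H_deriv_t:
  assumes "solves_ode2 g g' \<kappa>"
  shows "((\<lambda>s. H g s x) has_real_derivative
           K t * exp (- cA * (x - \<gamma>2 t) / 2) *
           ((cA\<^sup>2 / 2 - lc * (cA - c)) * g (x - \<gamma>2 t) - cA * g' (x - \<gamma>2 t))) (at t)"
proof -
  have g: "(g has_real_derivative g' w) (at w)" for w using assms by (simp add: solves_ode2_def)
  show ?thesis unfolding H_def K_def \<gamma>2_def
    by (auto intro!: derivative_eq_intros DERIV_chain2[OF g] simp: algebra_simps power2_eq_square)
qed

lemma super_at_left:
  assumes "x < \<gamma>1 t" and "f t x (2 * C) \<le> 0"
  shows "super_at f I U t x"
proof (rule super_at_if_eq_on_open[where W = "{p. snd p < \<gamma>1 (fst p)}" and G = "\<lambda>_ _. 2 * C"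
      and Gx = "\<lambda>_. 0" and Gxx = 0 and Gt = 0])
  show "open {p. snd p < \<gamma>1 (fst p)}"
    unfolding \<gamma>1_def by (intro open_Collect_less continuous_intros)
qed (use assms U_left in auto)

lemma super_at_mid:
  assumes "\<gamma>1 t < x" "x < \<gamma>2 t" and f_le: "\<And>u. 0 \<le> u \<Longrightarrow> f t x u \<le> r1 * u"
  shows "super_at f I U t x"
proof (rule super_at_if_eq_on_open[where W = "{p. \<gamma>1 (fst p) < snd p \<and> snd p < \<gamma>2 (fst p)}",
      OF _ _ _ E_deriv_x E_deriv_xx E_deriv_t])
  show "open {p. \<gamma>1 (fst p) < snd p \<and> snd p < \<gamma>2 (fst p)}"
    unfolding \<gamma>1_def \<gamma>2_def by (intro open_Collect_conj open_Collect_less continuous_intros)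
  have "(lc\<^sup>2 + r1) * E t x \<le> lc * c * E t x"
    using mult_right_mono[OF lc_sq_le] E_pos[of t x] by simp
  then show "lc * c * E t x \<ge> lc\<^sup>2 * E t x + f t x (E t x)"
    using f_le[of "E t x"] E_pos[of t x] by (simp add: algebra_simps)
qed (use assms U_mid in auto)

text \<open>By \<open>decay_le\<close>, \<open>(H g)_t - (H g)_xx = (\<rho> + l + cA\<^sup>2/4 - lc (cA - c)) H g \<ge> \<rho> H g\<close>,
  and the KPP bound \<open>f u \<le> \<rho> u\<close> absorbs the reaction term.\<close>
lemma super_at_H:
  assumes ode: "solves_ode2 g g' (- (\<rho> + l))" and g_nonneg: "0 \<le> g (x - \<gamma>2 t)"
    and f_le: "\<And>u. 0 \<le> u \<Longrightarrow> f t x u \<le> \<rho> * u"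
    and W: "open W" "(t, x) \<in> W" "\<And>s y. (s, y) \<in> W \<Longrightarrow> U s y = H g s y"
  shows "super_at f I U t x"
proof (rule super_at_if_eq_on_open[OF W H_deriv_x[OF ode] H_deriv_xx[OF ode] H_deriv_t[OF ode]])
  define e where "e = K t * exp (- cA * (x - \<gamma>2 t) / 2)"
  have "0 \<le> e * g (x - \<gamma>2 t)" unfolding e_def using K_pos[of t] g_nonneg by simp
  then have "f t x (e * g (x - \<gamma>2 t)) \<le> \<rho> * (e * g (x - \<gamma>2 t))"
    and "0 \<le> e * g (x - \<gamma>2 t) * (cA\<^sup>2 / 4 + l - lc * (cA - c))"
    using f_le decay_le by simp_all
  then show "e * ((cA\<^sup>2 / 2 - lc * (cA - c)) * g (x - \<gamma>2 t) - cA * g' (x - \<gamma>2 t))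
    \<ge> e * ((- (\<rho> + l) + cA\<^sup>2 / 4) * g (x - \<gamma>2 t) - cA * g' (x - \<gamma>2 t)) + f t x (H g t x)"
    unfolding H_def e_def[symmetric] by (simp add: algebra_simps)
qed

lemma super_at_inner:
  assumes "tau \<le> t" "\<gamma>2 t < x" "x < \<gamma>3 t" and f_le: "\<And>u. 0 \<le> u \<Longrightarrow> f t x u \<le> r2 * u"
  shows "super_at f I U t x"
proof (rule super_at_H[where \<rho> = r2 and f = f and t = t and x = x, OF ode1 _ f_le,
      where W = "{p. \<gamma>1 (fst p) < snd p \<and> \<gamma>2 (fst p) < snd p \<and> snd p < \<gamma>3 (fst p)}"])
  show "0 \<le> g1 (x - \<gamma>2 t)" using assms by (intro g1_nonneg) (auto simp: \<gamma>3_def)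
  show "open {p. \<gamma>1 (fst p) < snd p \<and> \<gamma>2 (fst p) < snd p \<and> snd p < \<gamma>3 (fst p)}"
    unfolding \<gamma>1_def \<gamma>2_def \<gamma>3_def by (intro open_Collect_conj open_Collect_less continuous_intros)
qed (use assms \<gamma>1_less_\<gamma>2[of t] U_inner in auto)

lemma super_at_outer:
  assumes "tau \<le> t" "\<gamma>3 t < x" and f_le: "\<And>u. 0 \<le> u \<Longrightarrow> f t x u \<le> r3 * u"
  shows "super_at f I U t x"
proof (rule super_at_H[where \<rho> = r3 and f = f and t = t and x = x, OF ode2 _ f_le,
      where W = "{p. \<gamma>1 (fst p) < snd p \<and> \<gamma>3 (fst p) < snd p}"])
  show "0 \<le> g2 (x - \<gamma>2 t)" using assms by (intro g2_nonneg) (auto simp: \<gamma>3_def)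
  show "open {p. \<gamma>1 (fst p) < snd p \<and> \<gamma>3 (fst p) < snd p}"
    unfolding \<gamma>1_def \<gamma>3_def \<gamma>2_def by (intro open_Collect_conj open_Collect_less continuous_intros)
qed (use assms \<gamma>1_less_\<gamma>2[of t] \<gamma>2_less_\<gamma>3[of t] U_outer in auto)

lemma slope_drop_at_\<gamma>1:
  assumes "tau \<le> t"
  shows "slope_drop (U t) (\<gamma>1 t)"
proof (rule slope_drop_glue[where Gl = "\<lambda>_. 2 * C" and d = "\<gamma>2 t - \<gamma>1 t", OF DERIV_const E_deriv_x])
  show "- lc * E t (\<gamma>1 t) \<le> 0" using lc_pos E_pos[of t "\<gamma>1 t"] by simp
  show "0 < \<gamma>2 t - \<gamma>1 t" using \<gamma>1_less_\<gamma>2[OF assms] by simp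
  show "U t z = E t z" if "\<gamma>1 t \<le> z" "z < \<gamma>1 t + (\<gamma>2 t - \<gamma>1 t)" for z
    using that U_mid[of t z] U_left[of z t] E_at_\<gamma>1[of t] by (cases "z = \<gamma>1 t") auto
qed (simp add: U_left)

lemma slope_drop_at_\<gamma>2:
  assumes "tau \<le> t"
  shows "slope_drop (U t) (\<gamma>2 t)"
proof (rule slope_drop_glue[where d = "min (\<gamma>2 t - \<gamma>1 t) L", OF E_deriv_x H_deriv_x[OF ode1]])
  have "K t * (g1' 0 - cA / 2) \<le> K t * (- lc)"
    using slope_0 K_pos[of t] by (intro mult_left_mono) auto
  then show "Hx g1 g1' t (\<gamma>2 t) \<le> - lc * E t (\<gamma>2 t)"
    unfolding Hx_def E_at_\<gamma>2 by (simp add: g1_0 mult.commute)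
  show "0 < min (\<gamma>2 t - \<gamma>1 t) L" using \<gamma>1_less_\<gamma>2[OF assms] L_pos by simp
  show "U t z = E t z" if "\<gamma>2 t - min (\<gamma>2 t - \<gamma>1 t) L < z" "z \<le> \<gamma>2 t" for z
    using that U_mid[of t z] U_inner[of t z] \<gamma>1_less_\<gamma>2[OF assms] \<gamma>2_less_\<gamma>3[of t]
      H_at_\<gamma>2[of t] E_at_\<gamma>2[of t]
    by (cases "z = \<gamma>2 t") auto
  show "U t z = H g1 t z" if "\<gamma>2 t \<le> z" "z < \<gamma>2 t + min (\<gamma>2 t - \<gamma>1 t) L" for z
    using that U_inner[of t z] \<gamma>1_less_\<gamma>2[OF assms] by (simp add: \<gamma>3_def)
qed

lemma slope_drop_at_\<gamma>3:
  assumes "tau \<le> t"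
  shows "slope_drop (U t) (\<gamma>3 t)"
proof (rule slope_drop_glue[where d = L, OF H_deriv_x[OF ode1] H_deriv_x[OF ode2] _ L_pos])
  have "K t * exp (- cA * L / 2) * (g2' L - cA / 2 * g2 L)
      \<le> K t * exp (- cA * L / 2) * (g1' L - cA / 2 * g1 L)"
    using g'_L g_L K_pos[of t] by (intro mult_left_mono) auto
  then show "Hx g2 g2' t (\<gamma>3 t) \<le> Hx g1 g1' t (\<gamma>3 t)"
    unfolding Hx_def \<gamma>3_def by simp
  show "U t z = H g1 t z" if "\<gamma>3 t - L < z" "z \<le> \<gamma>3 t" for z
    using that U_inner[of t z] U_outer[of t z] H_at_\<gamma>3[of t] \<gamma>1_less_\<gamma>2[OF assms]
    by (cases "z = \<gamma>3 t") (auto simp: \<gamma>3_def)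
  show "U t z = H g2 t z" if "\<gamma>3 t \<le> z" "z < \<gamma>3 t + L" for z
    using that U_outer[of t z] \<gamma>1_less_\<gamma>2[OF assms] \<gamma>2_less_\<gamma>3[of t] by simp
qed

lemma continuous_on_H:
  assumes "solves_ode2 g g' \<kappa>"
  shows "continuous_on S (\<lambda>p. H g (fst p) (snd p))"
  unfolding H_def K_def \<gamma>2_def
  by (intro continuous_intros continuous_on_compose2[OF solves_ode2_continuous_on[OF assms]]) auto

lemma continuous_on_U: "continuous_on ({tau..} \<times> UNIV) (\<lambda>(t, x). U t x)"
proof -
  define S1 where "S1 = {p. tau \<le> fst p \<and> snd p \<le> \<gamma>1 (fst p)}"
  define S2 where "S2 = {p. tau \<le> fst p \<and> \<gamma>1 (fst p) \<le> snd p \<and> snd p \<le> \<gamma>2 (fst p)}"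
  define S3 where "S3 = {p. tau \<le> fst p \<and> \<gamma>2 (fst p) \<le> snd p \<and> snd p \<le> \<gamma>3 (fst p)}"
  define S4 where "S4 = {p. tau \<le> fst p \<and> \<gamma>3 (fst p) \<le> snd p}"
  have closed: "closed S1" "closed S2" "closed S3" "closed S4"
    unfolding S1_def S2_def S3_def S4_def \<gamma>1_def \<gamma>2_def \<gamma>3_def
    by (intro closed_Collect_conj closed_Collect_le continuous_intros)+
  have "continuous_on S1 (\<lambda>p. U (fst p) (snd p))"
    by (rule continuous_on_eq[of _ "\<lambda>_. 2 * C"]) (auto simp: S1_def U_left)
  moreover have "continuous_on S2 (\<lambda>p. U (fst p) (snd p))"
  proof (rule continuous_on_eq[of _ "\<lambda>p. E (fst p) (snd p)"])
    show "continuous_on S2 (\<lambda>p. E (fst p) (snd p))" unfolding E_def by (intro continuous_intros)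
    show "E (fst p) (snd p) = U (fst p) (snd p)" if "p \<in> S2" for p
      using that U_left U_mid U_inner[of "fst p" "snd p"] E_at_\<gamma>1 E_at_\<gamma>2 H_at_\<gamma>2
        \<gamma>1_less_\<gamma>2[of "fst p"] \<gamma>2_less_\<gamma>3[of "fst p"] unfolding S2_def
      by (cases "snd p = \<gamma>1 (fst p)"; cases "snd p = \<gamma>2 (fst p)") auto
  qed
  moreover have "continuous_on S3 (\<lambda>p. U (fst p) (snd p))"
  proof (rule continuous_on_eq[OF continuous_on_H[OF ode1]])
    show "H g1 (fst p) (snd p) = U (fst p) (snd p)" if "p \<in> S3" for p
      using that U_inner[of "fst p" "snd p"] U_outer[of "fst p" "snd p"] H_at_\<gamma>3
        \<gamma>1_less_\<gamma>2[of "fst p"] \<gamma>2_less_\<gamma>3[of "fst p"] unfolding S3_def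
      by (cases "snd p = \<gamma>3 (fst p)") auto
  qed
  moreover have "continuous_on S4 (\<lambda>p. U (fst p) (snd p))"
  proof (rule continuous_on_eq[OF continuous_on_H[OF ode2]])
    show "H g2 (fst p) (snd p) = U (fst p) (snd p)" if "p \<in> S4" for p
      using that U_outer[of "fst p" "snd p"] \<gamma>1_less_\<gamma>2[of "fst p"] \<gamma>2_less_\<gamma>3[of "fst p"]
      unfolding S4_def by auto
  qed
  ultimately have "continuous_on (S1 \<union> S2 \<union> S3 \<union> S4) (\<lambda>p. U (fst p) (snd p))"
    using closed by (intro continuous_on_closed_Un closed_Un) auto
  moreover have "{tau..} \<times> UNIV = S1 \<union> S2 \<union> S3 \<union> S4"
    unfolding S1_def S2_def S3_def S4_def by auto
  ultimately show ?thesis by (simp add: case_prod_beta')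
qed

theorem gen_supersolution_U:
  assumes f_le: "\<And>t x u. t \<in> {tau..<tau + T} \<Longrightarrow> 0 \<le> u \<Longrightarrow>
      f t x u \<le> (if x < \<gamma>2 t then r1 else if x < \<gamma>3 t then r2 else r3) * u"
    and f_neg: "\<And>t x u. 1 < u \<Longrightarrow> f t x u < 0"
  shows "gen_supersolution f tau T U"
proof (rule gen_supersolutionI[where S = "{\<gamma>1, \<gamma>2, \<gamma>3}"])
  show "continuous_on ({tau..<tau + T} \<times> UNIV) (\<lambda>(t, x). U t x)"
    by (rule continuous_on_subset[OF continuous_on_U]) auto
  show "continuous_on {tau..<tau + T} \<gamma>" if "\<gamma> \<in> {\<gamma>1, \<gamma>2, \<gamma>3}" for \<gamma>
    using that unfolding \<gamma>1_def \<gamma>2_def \<gamma>3_def by (auto intro!: continuous_intros)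
  show "slope_drop (U t) (\<gamma> t)" if "t \<in> {tau..<tau + T}" "\<gamma> \<in> {\<gamma>1, \<gamma>2, \<gamma>3}" for t \<gamma>
    using that slope_drop_at_\<gamma>1 slope_drop_at_\<gamma>2 slope_drop_at_\<gamma>3 by auto
  show "super_at f {tau..<tau + T} U t x"
    if t: "t \<in> {tau..<tau + T}" and x: "\<And>\<gamma>. \<gamma> \<in> {\<gamma>1, \<gamma>2, \<gamma>3} \<Longrightarrow> x \<noteq> \<gamma> t" for t x
  proof -
    have ord: "\<gamma>1 t < \<gamma>2 t" "\<gamma>2 t < \<gamma>3 t" using t \<gamma>1_less_\<gamma>2 \<gamma>2_less_\<gamma>3 by auto
    consider "x < \<gamma>1 t" | "\<gamma>1 t < x" "x < \<gamma>2 t" | "\<gamma>2 t < x" "x < \<gamma>3 t" | "\<gamma>3 t < x"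
      using x[of \<gamma>1] x[of \<gamma>2] x[of \<gamma>3] by fastforce
    then show ?thesis
    proof cases
      case 1
      then show ?thesis using f_neg[of "2 * C" t x] C_ge_1 by (intro super_at_left) auto
    next
      case 2
      then show ?thesis by (intro super_at_mid) (use f_le[OF t, of _ x] in auto)
    next
      case 3
      then show ?thesis using t ord by (intro super_at_inner) (use f_le[OF t, of _ x] in auto)
    next
      case 4
      then show ?thesis using t ord by (intro super_at_outer) (use f_le[OF t, of _ x] in auto)
    qed
  qed
qed simp

end

lemma C3_of_eq_arctan:
  assumes "0 < s"
  shows "C3_of s = arctan (1 / s)"
  unfolding C3_of_def
proof (rule the_equality)
  show "0 < arctan (1 / s) \<and> arctan (1 / s) < pi / 2 \<and> cot (arctan (1 / s)) = s"
    using assms arctan_ubound[of "1 / s"] by (simp add: cot_altdef tan_arctan)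
  fix C assume C: "0 < C \<and> C < pi / 2 \<and> cot C = s"
  then have "tan C = 1 / s" by (simp add: tan_altdef inverse_eq_divide)
  moreover have "arctan (tan C) = C" using C by (intro arctan_tan) auto
  ultimately show "C = arctan (1 / s)" by simp
qed

lemma C3_of_bounds:
  assumes "0 < s"
  shows "0 < C3_of s" "C3_of s < pi / 2" "0 < sin (C3_of s)" "cos (C3_of s) = s * sin (C3_of s)"
proof -
  let ?C = "arctan (1 / s)"
  show "0 < C3_of s" "C3_of s < pi / 2"
    using assms arctan_ubound[of "1 / s"] by (simp_all add: C3_of_eq_arctan)
  then show "0 < sin (C3_of s)" by (intro sin_gt_zero) auto
  have "cot ?C = s" using assms by (simp add: cot_altdef tan_arctan)
  then show "cos (C3_of s) = s * sin (C3_of s)"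
    using \<open>0 < sin (C3_of s)\<close> assms by (simp add: C3_of_eq_arctan cot_def field_simps)
qed

lemma Lbar_eq_C3_of:
  assumes "r1 \<noteq> r3" "max r1 r3 < r2"
  shows "Lbar r1 r2 r3 =
    (pi / 2 - C3_of (sqrt (\<bar>r1 - r3\<bar> / (r2 - max r1 r3)))) / sqrt (r2 - max r1 r3)"
proof -
  have "0 < sqrt (\<bar>r1 - r3\<bar> / (r2 - max r1 r3))" using assms by simp
  moreover have "1 / sqrt (\<bar>r1 - r3\<bar> / (r2 - max r1 r3)) = sqrt ((r2 - max r1 r3) / \<bar>r1 - r3\<bar>)"
    by (simp add: real_sqrt_divide)
  ultimately show ?thesis
    using assms by (simp add: Lbar_def arccot_def C3_of_eq_arctan)
qed

definition eigen_eq :: "real \<Rightarrow> real \<Rightarrow> real \<Rightarrow> real \<Rightarrow> real \<Rightarrow> bool" where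
  "eigen_eq r1 r2 r3 L l \<longleftrightarrow> - r2 < l \<and> l < min (- max r1 r3) (pi\<^sup>2 / L\<^sup>2 - r2) \<and>
     cot (L * sqrt (r2 + l)) =
       (r2 + l - sqrt ((r1 + l) * (r3 + l))) / (sqrt (r2 + l) * (sqrt (- r1 - l) + sqrt (- r3 - l)))"

lemma lambda1_eq_The_eigen_eq:
  "Lbar r1 r2 r3 < L \<Longrightarrow> lambda1 r1 r2 r3 L = (THE l. eigen_eq r1 r2 r3 L l)"
  unfolding lambda1_def eigen_eq_def by simp

lemma eigen_interval_sqrt:
  assumes L: "0 < L" and l: "- r2 < l" "l < min (- max r1 r3) (pi\<^sup>2 / L\<^sup>2 - r2)"
  shows "0 < sqrt (r2 + l)" "0 < sqrt (- r1 - l)" "0 < sqrt (- r3 - l)"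
    "(sqrt (r2 + l))\<^sup>2 = r2 + l" "sqrt ((r1 + l) * (r3 + l)) = sqrt (- r1 - l) * sqrt (- r3 - l)"
    "0 < L * sqrt (r2 + l)" "L * sqrt (r2 + l) < pi"
proof -
  show "0 < sqrt (r2 + l)" "0 < sqrt (- r1 - l)" "0 < sqrt (- r3 - l)" "(sqrt (r2 + l))\<^sup>2 = r2 + l"
    using l by auto
  show "sqrt ((r1 + l) * (r3 + l)) = sqrt (- r1 - l) * sqrt (- r3 - l)"
    by (simp add: real_sqrt_mult[symmetric] algebra_simps)
  show "0 < L * sqrt (r2 + l)" using l L by simp
  have "r2 + l < (pi / L)\<^sup>2" using l by (simp add: power_divide)
  then have "sqrt (r2 + l) < pi / L"
    using real_sqrt_less_mono[of "r2 + l" "(pi / L)\<^sup>2"] L by simp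
  then show "L * sqrt (r2 + l) < pi" using L by (simp add: field_simps)
qed

lemma cot_strict_antimono:
  assumes "0 < a" "a < b" "b < pi"
  shows "cot b < cot a"
proof -
  have "0 < sin a" "0 < sin b" "0 < sin (b - a)" using assms by (auto intro!: sin_gt_zero)
  then show ?thesis by (simp add: cot_def sin_diff divide_simps algebra_simps)
qed

text \<open>With \<open>u = sqrt (r2 + l)\<close>, \<open>p = sqrt (- r1 - l)\<close>, \<open>q = sqrt (- r3 - l)\<close> this is the
  right-hand side of \<open>eigen_eq\<close>, which therefore increases with \<open>l\<close> while its left-hand side
  decreases: the equation has at most one root.\<close>
lemma eigen_rhs_strict_mono:
  fixes u1 u2 p1 p2 q1 q2 :: real
  assumes "0 < u1" "u1 < u2" "0 < p2" "p2 < p1" "0 < q2" "q2 < q1"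
  shows "(u1\<^sup>2 - p1 * q1) / (u1 * (p1 + q1)) < (u2\<^sup>2 - p2 * q2) / (u2 * (p2 + q2))"
proof -
  have split: "(u\<^sup>2 - p * q) / (u * (p + q)) = u / (p + q) - (p * q / (p + q)) / u"
    if "0 < u" "0 < p" "0 < q" for u p q :: real
  proof -
    have "u / (p + q) = u\<^sup>2 / (u * (p + q))" and "p * q / (p + q) / u = p * q / (u * (p + q))"
      using that by (simp_all add: power2_eq_square)
    then show ?thesis by (simp add: diff_divide_distrib)
  qed
  have "u1 / (p1 + q1) < u2 / (p2 + q2)"
    using assms by (intro frac_less) auto
  moreover have "p2 * q2 * (p1 + q1) \<le> p1 * q1 * (p2 + q2)"
  proof -
    have "0 \<le> p1 * p2 * (q1 - q2) + q1 * q2 * (p1 - p2)" using assms by simp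
    then show ?thesis by (simp add: algebra_simps)
  qed
  then have "p2 * q2 / (p2 + q2) \<le> p1 * q1 / (p1 + q1)"
    using assms by (simp add: divide_simps mult.commute)
  then have "(p2 * q2 / (p2 + q2)) / u2 < (p1 * q1 / (p1 + q1)) / u1"
    using assms by (intro frac_less2) auto
  ultimately show ?thesis using assms by (simp add: split)
qed

lemma eigen_eq_unique:
  assumes L: "0 < L" and eq: "eigen_eq r1 r2 r3 L l1" "eigen_eq r1 r2 r3 L l2"
  shows "l1 = l2"
proof -
  define R where "R l = (r2 + l - sqrt ((r1 + l) * (r3 + l))) /
      (sqrt (r2 + l) * (sqrt (- r1 - l) + sqrt (- r3 - l)))" for l
  have False if lt: "a < b" and a: "eigen_eq r1 r2 r3 L a" and b: "eigen_eq r1 r2 r3 L b" for a b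
  proof -
    have "- r2 < a" "a < min (- max r1 r3) (pi\<^sup>2 / L\<^sup>2 - r2)"
      and "- r2 < b" "b < min (- max r1 r3) (pi\<^sup>2 / L\<^sup>2 - r2)"
      using a b by (auto simp: eigen_eq_def)
    note sa = eigen_interval_sqrt[OF L this(1,2)] and sb = eigen_interval_sqrt[OF L this(3,4)]
    have "cot (L * sqrt (r2 + b)) < cot (L * sqrt (r2 + a))"
      using lt L sa(6) sb(7) by (intro cot_strict_antimono) auto
    moreover have "R a < R b"
      using eigen_rhs_strict_mono[of "sqrt (r2 + a)" "sqrt (r2 + b)" "sqrt (- r1 - b)" "sqrt (- r1 - a)"
          "sqrt (- r3 - b)" "sqrt (- r3 - a)"] lt sa sb
      by (simp add: R_def)
    ultimately show False using a b unfolding eigen_eq_def R_def by simp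
  qed
  then show ?thesis using eq by (metis linorder_neqE_linordered_idom)
qed

text \<open>The equation of \<open>eigen_eq\<close> with its (positive) denominators cleared; being
  continuous in \<open>l\<close>, it yields a root by the intermediate value theorem.\<close>
definition eigen_residual :: "real \<Rightarrow> real \<Rightarrow> real \<Rightarrow> real \<Rightarrow> real \<Rightarrow> real" where
  "eigen_residual r1 r2 r3 L l =
     cos (L * sqrt (r2 + l)) * (sqrt (r2 + l) * (sqrt (- r1 - l) + sqrt (- r3 - l)))
     - sin (L * sqrt (r2 + l)) * (r2 + l - sqrt ((r1 + l) * (r3 + l)))"

lemma continuous_on_eigen_residual: "continuous_on S (eigen_residual r1 r2 r3 L)"
  unfolding eigen_residual_def by (intro continuous_intros)

lemma eigen_eq_if_residual_eq_0:
  assumes L: "0 < L" and l: "- r2 < l" "l < min (- max r1 r3) (pi\<^sup>2 / L\<^sup>2 - r2)"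
    and zero: "eigen_residual r1 r2 r3 L l = 0"
  shows "eigen_eq r1 r2 r3 L l"
proof -
  note i = eigen_interval_sqrt[OF L l]
  have "0 < sin (L * sqrt (r2 + l))" using i by (intro sin_gt_zero) auto
  moreover have "0 < sqrt (r2 + l) * (sqrt (- r1 - l) + sqrt (- r3 - l))"
    using i(1-3) by (intro mult_pos_pos add_pos_pos)
  ultimately show ?thesis
    using l zero by (simp add: eigen_eq_def eigen_residual_def cot_def field_simps)
qed

lemma eigen_residual_pos_near_left:
  assumes L: "0 < L" and r2_gt: "max r1 r3 < r2"
    and mid: "- r2 < mid" "mid \<le> min (- max r1 r3) (pi\<^sup>2 / L\<^sup>2 - r2)"
  shows "\<exists>a. - r2 < a \<and> a < mid \<and> 0 < eigen_residual r1 r2 r3 L a"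
proof -
  have "((\<lambda>l. r2 + l - sqrt ((r1 + l) * (r3 + l))) \<longlongrightarrow> r2 + - r2 - sqrt ((r1 + - r2) * (r3 + - r2)))
      (at_right (- r2))"
    by (intro tendsto_intros)
  moreover have "0 < (r1 + - r2) * (r3 + - r2)" using r2_gt by (intro mult_neg_neg) auto
  ultimately have "\<forall>\<^sub>F l in at_right (- r2). r2 + l - sqrt ((r1 + l) * (r3 + l)) < 0"
    by (intro order_tendstoD(2)) auto
  moreover have "((\<lambda>l. L * sqrt (r2 + l)) \<longlongrightarrow> L * sqrt (r2 + - r2)) (at_right (- r2))"
    by (intro tendsto_intros)
  then have "\<forall>\<^sub>F l in at_right (- r2). L * sqrt (r2 + l) < pi / 2"
    by (rule order_tendstoD(2)) simp
  moreover have "\<forall>\<^sub>F l in at_right (- r2). l < mid"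
    using mid(1) by (intro order_tendstoD(2)[OF tendsto_ident_at]) simp
  ultimately have "\<forall>\<^sub>F l in at_right (- r2). - r2 < l \<and> l < mid \<and>
      r2 + l - sqrt ((r1 + l) * (r3 + l)) < 0 \<and> L * sqrt (r2 + l) < pi / 2"
    using eventually_at_right_less[of "- r2"] by eventually_elim auto
  then obtain a where a: "- r2 < a" "a < mid" "r2 + a - sqrt ((r1 + a) * (r3 + a)) < 0"
      "L * sqrt (r2 + a) < pi / 2"
    using eventually_happens'[OF trivial_limit_at_right_real] by blast
  then have "a < min (- max r1 r3) (pi\<^sup>2 / L\<^sup>2 - r2)" using mid by linarith
  note i = eigen_interval_sqrt[OF L a(1) this]
  have "0 < cos (L * sqrt (r2 + a)) * (sqrt (r2 + a) * (sqrt (- r1 - a) + sqrt (- r3 - a)))"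
    using a i by (intro mult_pos_pos cos_gt_zero_pi add_pos_pos) auto
  moreover have "sin (L * sqrt (r2 + a)) * (r2 + a - sqrt ((r1 + a) * (r3 + a))) < 0"
    using a i by (intro mult_pos_neg sin_gt_zero) auto
  ultimately show ?thesis using a unfolding eigen_residual_def by (intro exI[of _ a]) auto
qed

lemma eigen_residual_neg_at_max:
  assumes ne: "r1 \<noteq> r3" and r2_gt: "max r1 r3 < r2" and LL: "Lbar r1 r2 r3 < L"
    and le_pi: "L * sqrt (r2 - max r1 r3) \<le> pi"
  shows "eigen_residual r1 r2 r3 L (- max r1 r3) < 0"
proof -
  define M where "M = max r1 r3"
  define k where "k = sqrt (r2 - M)"
  define s where "s = sqrt (\<bar>r1 - r3\<bar> / (r2 - M))"
  define C3 where "C3 = C3_of s"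
  have k: "0 < k" "k\<^sup>2 = r2 - M" using r2_gt by (auto simp: k_def M_def)
  have s: "0 < s" using ne r2_gt by (simp add: s_def M_def)
  note C3 = C3_of_bounds[OF s, folded C3_def]
  have "sqrt (- r1 - - M) + sqrt (- r3 - - M) = sqrt \<bar>r1 - r3\<bar>"
    by (auto simp: M_def max_def)
  also have "\<dots> = k * s"
    using r2_gt by (simp add: k_def s_def M_def real_sqrt_mult[symmetric] less_imp_neq[symmetric])
  finally have sum: "sqrt (- r1 - - M) + sqrt (- r3 - - M) = k * s" .
  have prod: "(r1 + - M) * (r3 + - M) = 0" by (auto simp: M_def max_def)
  have "eigen_residual r1 r2 r3 L (- M) = k\<^sup>2 * (s * cos (L * k) - sin (L * k))"
    unfolding eigen_residual_def sum prod
    using k(1) by (simp add: k_def[symmetric] k(2)[symmetric] power2_eq_square algebra_simps)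
  also have "\<dots> = k\<^sup>2 * cos (L * k + C3) / sin C3"
    using C3(3,4) by (simp add: cos_add field_simps)
  finally have res: "eigen_residual r1 r2 r3 L (- M) = k\<^sup>2 * cos (L * k + C3) / sin C3" .
  have "Lbar r1 r2 r3 = (pi / 2 - C3) / k"
    using Lbar_eq_C3_of[OF ne r2_gt] by (simp add: C3_def s_def k_def M_def)
  then have "pi / 2 - C3 = k * Lbar r1 r2 r3" using k(1) by simp
  moreover have "k * Lbar r1 r2 r3 < k * L" using LL k(1) by simp
  ultimately have "pi / 2 < L * k + C3" by (simp add: mult.commute)
  moreover have "L * k + C3 < 3 * pi / 2" using le_pi C3(2) by (simp add: k_def M_def)
  ultimately have "cos (L * k + C3) < 0" by (rule cos_lt_zero_pi)
  then show ?thesis unfolding M_def[symmetric] res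
    using k(1) C3(3) by (intro divide_neg_pos mult_pos_neg) auto
qed

lemma eigen_residual_at_right_end:
  assumes L: "0 < L" and r2_gt: "max r1 r3 < r2" and LL: "Lbar r1 r2 r3 < L"
    and m: "m = min (- max r1 r3) (pi\<^sup>2 / L\<^sup>2 - r2)"
  shows "eigen_residual r1 r2 r3 L m < 0 \<or> (r1 = r3 \<and> m = - r1 \<and> L * sqrt (r2 + m) = pi)"
proof -
  have "- r2 < m" using m r2_gt L by auto
  then have k: "0 < sqrt (r2 + m)" by simp
  have "r2 + m \<le> (pi / L)\<^sup>2" using m by (simp add: power_divide)
  then have "sqrt (r2 + m) \<le> pi / L" using real_sqrt_le_mono[of "r2 + m" "(pi / L)\<^sup>2"] L by simp
  then have le_pi: "L * sqrt (r2 + m) \<le> pi" using L by (simp add: field_simps)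
  consider (pi) "m < - max r1 r3" | (eq) "r1 = r3" "m = - r1" | (ne) "r1 \<noteq> r3" "m = - max r1 r3"
    using m by (fastforce simp: max_def)
  then show ?thesis
  proof cases
    case pi
    then have "sqrt (r2 + m) = pi / L" using m L by (simp add: power_divide[symmetric])
    then have "eigen_residual r1 r2 r3 L m = - (sqrt (r2 + m) * (sqrt (- r1 - m) + sqrt (- r3 - m)))"
      using L by (simp add: eigen_residual_def)
    moreover have "0 < sqrt (r2 + m) * (sqrt (- r1 - m) + sqrt (- r3 - m))"
      using k pi by (intro mult_pos_pos add_pos_pos) auto
    ultimately show ?thesis by simp
  next
    case eq
    then have res: "eigen_residual r1 r2 r3 L m = - (sin (L * sqrt (r2 + m)) * (r2 + m))"
      by (simp add: eigen_residual_def)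
    show ?thesis
    proof (cases "L * sqrt (r2 + m) = pi")
      case False
      then have "0 < sin (L * sqrt (r2 + m))" using le_pi k L by (intro sin_gt_zero) auto
      then show ?thesis using res \<open>- r2 < m\<close> by simp
    qed (use eq in simp)
  next
    case ne
    then show ?thesis using eigen_residual_neg_at_max[OF ne(1) r2_gt LL] le_pi by simp
  qed
qed

text \<open>If \<open>r1 = r3\<close> and the interval for \<open>l\<close> closes at \<open>L sqrt (r2 + l) = pi\<close>, the residual
  vanishes at the right end, so its sign has to be read off just below it.\<close>
lemma eigen_residual_neg_below_degenerate:
  assumes L: "0 < L" and r2_gt: "max r1 r3 < r2" and m: "m = min (- max r1 r3) (pi\<^sup>2 / L\<^sup>2 - r2)"
    and r13: "r1 = r3" "m = - r1" and pi: "L * sqrt (r2 + m) = pi"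
  shows "\<forall>\<^sub>F l in at_left m. eigen_residual r1 r2 r3 L l < 0"
proof -
  have "((\<lambda>l. r2 + l - sqrt ((r1 + l) * (r3 + l))) \<longlongrightarrow> r2 + m - sqrt ((r1 + m) * (r3 + m))) (at_left m)"
    by (intro tendsto_intros)
  then have "\<forall>\<^sub>F l in at_left m. 0 < r2 + l - sqrt ((r1 + l) * (r3 + l))"
    by (rule order_tendstoD(1)) (use r13 r2_gt in simp)
  moreover have "((\<lambda>l. L * sqrt (r2 + l)) \<longlongrightarrow> L * sqrt (r2 + m)) (at_left m)"
    by (intro tendsto_intros)
  then have "\<forall>\<^sub>F l in at_left m. pi / 2 < L * sqrt (r2 + l)"
    by (rule order_tendstoD(1)) (use pi in simp)
  moreover have "- r2 < m" using r2_gt r13 by simp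
  then have "\<forall>\<^sub>F l in at_left m. - r2 < l \<and> l < m"
    using eventually_at_left_real by simp
  ultimately show ?thesis
  proof eventually_elim
    case (elim l)
    then have "- r2 < l" "l < min (- max r1 r3) (pi\<^sup>2 / L\<^sup>2 - r2)" using m by auto
    note s = eigen_interval_sqrt[OF L this]
    have "cos (L * sqrt (r2 + l)) * (sqrt (r2 + l) * (sqrt (- r1 - l) + sqrt (- r3 - l))) < 0"
      using elim s L by (intro mult_neg_pos cos_lt_zero_pi mult_pos_pos add_pos_pos) auto
    moreover have "0 < sin (L * sqrt (r2 + l)) * (r2 + l - sqrt ((r1 + l) * (r3 + l)))"
      using elim s L by (intro mult_pos_pos sin_gt_zero) auto
    ultimately show ?case unfolding eigen_residual_def by simp
  qed
qed

lemma eigen_residual_neg_near_right: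
  assumes L: "0 < L" and r2_gt: "max r1 r3 < r2" and LL: "Lbar r1 r2 r3 < L"
    and m: "m = min (- max r1 r3) (pi\<^sup>2 / L\<^sup>2 - r2)" and mid: "mid < m"
  shows "\<exists>b. mid < b \<and> b < m \<and> eigen_residual r1 r2 r3 L b < 0"
proof -
  consider "eigen_residual r1 r2 r3 L m < 0" | "r1 = r3" "m = - r1" "L * sqrt (r2 + m) = pi"
    using eigen_residual_at_right_end[OF L r2_gt LL m] by blast
  then have "\<forall>\<^sub>F l in at_left m. eigen_residual r1 r2 r3 L l < 0"
  proof cases
    case 1
    have "(eigen_residual r1 r2 r3 L \<longlongrightarrow> eigen_residual r1 r2 r3 L m) (at_left m)"
      using continuous_on_eigen_residual[of UNIV] by (simp add: continuous_on_def filterlim_at_split)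
    then show ?thesis using 1 by (rule order_tendstoD(2))
  next
    case 2
    then show ?thesis by (rule eigen_residual_neg_below_degenerate[OF L r2_gt m])
  qed
  moreover have "\<forall>\<^sub>F l in at_left m. mid < l \<and> l < m"
    using eventually_at_left_real[OF mid] by simp
  ultimately have "\<forall>\<^sub>F l in at_left m. mid < l \<and> l < m \<and> eigen_residual r1 r2 r3 L l < 0"
    by eventually_elim auto
  then show ?thesis using eventually_happens'[OF trivial_limit_at_left_real] by blast
qed

lemma eigen_eq_lambda1:
  assumes L: "0 < L" and r2_gt: "max r1 r3 < r2" and LL: "Lbar r1 r2 r3 < L"
  shows "eigen_eq r1 r2 r3 L (lambda1 r1 r2 r3 L)"
proof -
  define m where "m = min (- max r1 r3) (pi\<^sup>2 / L\<^sup>2 - r2)"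
  define mid where "mid = (- r2 + m) / 2"
  have "0 < pi\<^sup>2 / L\<^sup>2" using L by simp
  then have "- r2 < m" using r2_gt by (auto simp: m_def)
  then have mid: "- r2 < mid" "mid < m" by (auto simp: mid_def)
  obtain a where a: "- r2 < a" "a < mid" "0 < eigen_residual r1 r2 r3 L a"
    using eigen_residual_pos_near_left[OF L r2_gt mid(1)] mid(2) by (auto simp: m_def)
  obtain b where b: "mid < b" "b < m" "eigen_residual r1 r2 r3 L b < 0"
    using eigen_residual_neg_near_right[OF L r2_gt LL m_def mid(2)] by blast
  obtain l where l: "a \<le> l" "l \<le> b" "eigen_residual r1 r2 r3 L l = 0"
    using IVT2'[of "eigen_residual r1 r2 r3 L" b 0 a] a b continuous_on_eigen_residual by force
  have "- r2 < l" "l < m" using a b l mid by linarith+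
  then have eq: "eigen_eq r1 r2 r3 L l"
    using eigen_eq_if_residual_eq_0[OF L _ _ l(3)] by (simp add: m_def)
  have "lambda1 r1 r2 r3 L = l"
    unfolding lambda1_eq_The_eigen_eq[OF LL]
    using eq eigen_eq_unique[OF L] by blast
  then show ?thesis using eq by simp
qed

definition phi1_profile ::
  "real \<Rightarrow> real \<Rightarrow> real \<Rightarrow> real \<Rightarrow> real \<Rightarrow>
   (real \<Rightarrow> real) \<Rightarrow> (real \<Rightarrow> real) \<Rightarrow> (real \<Rightarrow> real) \<Rightarrow> (real \<Rightarrow> real) \<Rightarrow> bool" where
  "phi1_profile r1 r2 r3 L l g1 g1' g2 g2' \<longleftrightarrow>
     junction_profile r2 r3 l L g1 g1' g2 g2' \<and> g1' 0 \<le> sqrt (- l - r1) \<and>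
     (\<forall>w\<ge>0. phi1 r1 r2 r3 L (w / L) = (if w < L then g1 w else g2 w))"

lemma sin_affine_nonneg:
  assumes "0 \<le> w" "w \<le> L" "0 \<le> \<beta>" "\<beta> \<le> pi" "0 \<le> \<kappa> * L + \<beta>" "\<kappa> * L + \<beta> \<le> pi"
  shows "0 \<le> sin (\<kappa> * w + \<beta>)"
proof (rule sin_ge_zero)
  have "0 \<le> \<kappa> * w \<and> \<kappa> * w \<le> \<kappa> * L \<or> \<kappa> * L \<le> \<kappa> * w \<and> \<kappa> * w \<le> 0"
    using assms(1,2)
    by (cases "0 \<le> \<kappa>") (auto intro: mult_left_mono mult_left_mono_neg mult_nonpos_nonneg)
  then show "0 \<le> \<kappa> * w + \<beta>" "\<kappa> * w + \<beta> \<le> pi" using assms(3-6) by linarith+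
qed

lemma junction_profile_sin_exp:
  assumes a: "0 \<le> a" "a * sin \<beta> = 1" and \<kappa>: "\<kappa>\<^sup>2 = r2 + l" and q: "q\<^sup>2 = - r3 - l"
    and angles: "0 \<le> \<beta>" "\<beta> \<le> pi" "0 \<le> \<kappa> * L + \<beta>" "\<kappa> * L + \<beta> \<le> pi"
    and junction: "- q * sin (\<kappa> * L + \<beta>) \<le> \<kappa> * cos (\<kappa> * L + \<beta>)"
  shows "junction_profile r2 r3 l L (\<lambda>w. a * sin (\<kappa> * w + \<beta>)) (\<lambda>w. a * \<kappa> * cos (\<kappa> * w + \<beta>))
    (\<lambda>w. a * sin (\<kappa> * L + \<beta>) * exp (- q * (w - L)))
    (\<lambda>w. a * sin (\<kappa> * L + \<beta>) * - q * exp (- q * (w - L)))"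
  unfolding junction_profile_def
proof (intro conjI allI impI)
  show "solves_ode2 (\<lambda>w. a * sin (\<kappa> * w + \<beta>)) (\<lambda>w. a * \<kappa> * cos (\<kappa> * w + \<beta>)) (- (r2 + l))"
    using solves_ode2_sin[of a \<kappa> \<beta>] \<kappa> by simp
  show "solves_ode2 (\<lambda>w. a * sin (\<kappa> * L + \<beta>) * exp (- q * (w - L)))
      (\<lambda>w. a * sin (\<kappa> * L + \<beta>) * - q * exp (- q * (w - L))) (- (r3 + l))"
    using solves_ode2_exp[of "a * sin (\<kappa> * L + \<beta>)" "- q" L] q by simp
  show "0 \<le> a * sin (\<kappa> * w + \<beta>)" if "0 \<le> w \<and> w \<le> L" for w
    using that angles a(1) by (auto intro!: mult_nonneg_nonneg sin_affine_nonneg)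
  show "0 \<le> a * sin (\<kappa> * L + \<beta>) * exp (- q * (w - L))" for w
    using angles a(1) by (simp add: sin_ge_zero)
  show "a * sin (\<kappa> * L + \<beta>) * - q * exp (- q * (L - L)) \<le> a * \<kappa> * cos (\<kappa> * L + \<beta>)"
    using mult_left_mono[OF junction a(1)] by (simp add: algebra_simps)
qed (use a in simp_all)

lemma junction_profile_sin_affine:
  assumes a: "0 \<le> a" "a * sin \<beta> = 1" and \<kappa>: "\<kappa>\<^sup>2 = r2 + l" and l: "r3 + l = 0"
    and angles: "0 \<le> \<beta>" "\<beta> \<le> pi" "0 \<le> \<kappa> * L + \<beta>" "\<kappa> * L + \<beta> \<le> pi"
    and slope: "0 \<le> \<kappa> * cos (\<kappa> * L + \<beta>)"
  shows "junction_profile r2 r3 l L (\<lambda>w. a * sin (\<kappa> * w + \<beta>)) (\<lambda>w. a * \<kappa> * cos (\<kappa> * w + \<beta>))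
    (\<lambda>w. a * sin (\<kappa> * L + \<beta>) + a * \<kappa> * cos (\<kappa> * L + \<beta>) * (w - L))
    (\<lambda>_. a * \<kappa> * cos (\<kappa> * L + \<beta>))"
  unfolding junction_profile_def
proof (intro conjI allI impI)
  show "solves_ode2 (\<lambda>w. a * sin (\<kappa> * w + \<beta>)) (\<lambda>w. a * \<kappa> * cos (\<kappa> * w + \<beta>)) (- (r2 + l))"
    using solves_ode2_sin[of a \<kappa> \<beta>] \<kappa> by simp
  show "solves_ode2 (\<lambda>w. a * sin (\<kappa> * L + \<beta>) + a * \<kappa> * cos (\<kappa> * L + \<beta>) * (w - L))
      (\<lambda>_. a * \<kappa> * cos (\<kappa> * L + \<beta>)) (- (r3 + l))"
    using solves_ode2_affine l by simp
  show "0 \<le> a * sin (\<kappa> * w + \<beta>)" if "0 \<le> w \<and> w \<le> L" for w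
    using that angles a(1) by (auto intro!: mult_nonneg_nonneg sin_affine_nonneg)
  show "0 \<le> a * sin (\<kappa> * L + \<beta>) + a * \<kappa> * cos (\<kappa> * L + \<beta>) * (w - L)" if "L \<le> w" for w
  proof -
    have "0 \<le> a * (\<kappa> * cos (\<kappa> * L + \<beta>)) * (w - L)"
      using that slope a(1) by (auto intro!: mult_nonneg_nonneg)
    moreover have "0 \<le> a * sin (\<kappa> * L + \<beta>)"
      using angles a(1) by (auto intro!: mult_nonneg_nonneg sin_ge_zero)
    ultimately show ?thesis by (simp add: mult.assoc)
  qed
qed (use a in simp_all)

text \<open>The equation for \<open>lambda1\<close> is precisely the \<open>C\<^sup>1\<close> matching at \<open>y = 1\<close> of the sine
  piece of \<open>phi_case1\<close> with its decaying exponential tail.\<close>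
lemma eigen_eq_angle:
  assumes L: "0 < L" and eq: "eigen_eq r1 r2 r3 L l"
  defines "k \<equiv> sqrt (r2 + l)" and "q \<equiv> sqrt (- r3 - l)"
    and "C3 \<equiv> C3_of (sqrt ((- r1 - l) / (r2 + l)))"
  shows "k * cos (L * k + C3) = - q * sin (L * k + C3)" and "L * k + C3 < pi"
proof -
  define p where "p = sqrt (- r1 - l)"
  have l: "- r2 < l" "l < min (- max r1 r3) (pi\<^sup>2 / L\<^sup>2 - r2)" using eq by (auto simp: eigen_eq_def)
  note s = eigen_interval_sqrt[OF L l, folded k_def p_def q_def]
  have "sqrt ((- r1 - l) / (r2 + l)) = p / k" by (simp add: p_def k_def real_sqrt_divide)
  then have C3: "0 < C3" "C3 < pi / 2" "cos C3 = p / k * sin C3"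
    using C3_of_bounds[of "p / k"] s(1,2) by (simp_all add: C3_def)
  have "cot (L * k) = (k\<^sup>2 - p * q) / (k * (p + q))"
    using eq s(4,5) by (simp add: eigen_eq_def k_def p_def q_def)
  moreover have "sin (L * k) \<noteq> 0" using s(6,7) sin_gt_zero by fastforce
  moreover have "k * (p + q) \<noteq> 0" using s(1-3) by simp
  ultimately have "cos (L * k) * (k * (p + q)) = sin (L * k) * (k\<^sup>2 - p * q)"
    by (simp add: cot_def frac_eq_eq mult.commute)
  moreover have "k * cos C3 = p * sin C3" using C3(3) s(1) by simp
  moreover have "k * (k * cos (L * k + C3) + q * sin (L * k + C3))
      = sin C3 * (cos (L * k) * (k * (p + q)) - sin (L * k) * (k\<^sup>2 - p * q))
        + (k * cos C3 - p * sin C3) * (k * cos (L * k) + q * sin (L * k))"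
    by (simp add: cos_add sin_add algebra_simps power2_eq_square)
  ultimately have "k * (k * cos (L * k + C3) + q * sin (L * k + C3)) = 0" by simp
  then show ident: "k * cos (L * k + C3) = - q * sin (L * k + C3)"
    using s(1) by simp
  show "L * k + C3 < pi"
  proof (rule ccontr)
    assume "\<not> L * k + C3 < pi"
    then have "pi \<le> L * k + C3" "L * k + C3 < 3 * pi / 2" using s(7) C3(2) by auto
    then have "cos (L * k + C3) < 0" "sin (L * k + C3) \<le> 0"
      by (auto intro!: cos_lt_zero_pi sin_le_zero)
    then show False using ident s(1,3) mult_pos_neg[of k] mult_nonneg_nonpos[of q] by force
  qed
qed

lemma phi1_eq_case1:
  assumes L: "0 < L" and LL: "Lbar r1 r2 r3 < L" and w: "0 \<le> w" and l: "l = lambda1 r1 r2 r3 L"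
  defines "k \<equiv> sqrt (r2 + l)" and "q \<equiv> sqrt (- r3 - l)"
    and "C3 \<equiv> C3_of (sqrt ((- r1 - l) / (r2 + l)))"
  shows "phi1 r1 r2 r3 L (w / L) =
    (if w = 0 then 1 else if w < L then sin (k * w + C3) / sin C3
     else sin (k * L + C3) / sin C3 * exp (- q * (w - L)))"
proof -
  have "L * k * (w / L) = k * w" and "- L * q * (w / L - 1) = - q * (w - L)"
    using L by (simp_all add: field_simps)
  moreover have "w / L \<le> 0 \<longleftrightarrow> w = 0" and "w / L < 1 \<longleftrightarrow> w < L"
    using L w by (auto simp: divide_le_0_iff)
  ultimately show ?thesis
    using LL by (simp add: phi1_def phi_case1_def Let_def mult.commute
        flip: l k_def q_def C3_def)
qed

lemma phi1_profile_case1: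
  assumes L: "0 < L" and r2_gt: "max r1 r3 < r2" and LL: "Lbar r1 r2 r3 < L"
  shows "\<exists>g1 g1' g2 g2'. phi1_profile r1 r2 r3 L (lambda1 r1 r2 r3 L) g1 g1' g2 g2'"
proof -
  define l where "l = lambda1 r1 r2 r3 L"
  define k where "k = sqrt (r2 + l)"
  define p where "p = sqrt (- r1 - l)"
  define q where "q = sqrt (- r3 - l)"
  define C3 where "C3 = C3_of (sqrt ((- r1 - l) / (r2 + l)))"
  have eq: "eigen_eq r1 r2 r3 L l" unfolding l_def by (rule eigen_eq_lambda1[OF L r2_gt LL])
  then have "- r2 < l" "l < min (- max r1 r3) (pi\<^sup>2 / L\<^sup>2 - r2)" by (auto simp: eigen_eq_def)
  note s = eigen_interval_sqrt[OF L this, folded k_def p_def q_def]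
  note angle = eigen_eq_angle[OF L eq, folded k_def q_def C3_def, unfolded mult.commute[of L k]]
  have "sqrt ((- r1 - l) / (r2 + l)) = p / k" by (simp add: p_def k_def real_sqrt_divide)
  then have C3: "0 < C3" "C3 < pi / 2" "0 < sin C3" "cos C3 = p / k * sin C3"
    using C3_of_bounds[of "p / k"] s(1,2) by (simp_all add: C3_def)
  define a where "a = 1 / sin C3"
  have a: "0 < a" "a * sin C3 = 1" using C3(3) by (simp_all add: a_def)
  have "junction_profile r2 r3 l L (\<lambda>w. a * sin (k * w + C3)) (\<lambda>w. a * k * cos (k * w + C3))
      (\<lambda>w. a * sin (k * L + C3) * exp (- q * (w - L)))
      (\<lambda>w. a * sin (k * L + C3) * - q * exp (- q * (w - L)))"
    by (rule junction_profile_sin_exp) (use a s angle C3 in \<open>auto simp: k_def q_def mult.commute\<close>)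
  moreover have "a * k * cos (k * 0 + C3) \<le> sqrt (- l - r1)"
  proof -
    have "a * k * cos C3 = p * (a * sin C3)" using C3(4) s(1) by (simp add: field_simps)
    then show ?thesis using a(2) by (simp add: p_def algebra_simps)
  qed
  moreover have "phi1 r1 r2 r3 L (w / L) =
      (if w < L then a * sin (k * w + C3) else a * sin (k * L + C3) * exp (- q * (w - L)))"
    if "0 \<le> w" for w
    using phi1_eq_case1[OF L LL that l_def, folded k_def q_def C3_def] a L by (simp add: a_def)
  ultimately show ?thesis unfolding phi1_profile_def l_def[symmetric] by blast
qed

lemma angle_le_if_L_le_Lbar:
  assumes ne: "r1 \<noteq> r3" and r2_gt: "max r1 r3 < r2" and LL: "L \<le> Lbar r1 r2 r3"
  shows "L * sqrt (r2 - max r1 r3) + C3_of (sqrt (\<bar>r1 - r3\<bar> / (r2 - max r1 r3))) \<le> pi / 2"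
proof -
  have k: "0 < sqrt (r2 - max r1 r3)" using r2_gt by simp
  have "L * sqrt (r2 - max r1 r3) \<le> Lbar r1 r2 r3 * sqrt (r2 - max r1 r3)"
    using LL k by (intro mult_right_mono) auto
  moreover have "r2 \<noteq> max r1 r3" using r2_gt by (auto simp: max_def)
  ultimately show ?thesis using Lbar_eq_C3_of[OF ne r2_gt] k by simp
qed

lemma phi1_eq_case2:
  assumes L: "0 < L" and LL: "L \<le> Lbar r1 r2 r3" and r13: "r1 < r3" and w: "0 \<le> w"
  defines "k \<equiv> sqrt (r2 - r3)" and "C3 \<equiv> C3_of (sqrt ((r3 - r1) / (r2 - r3)))"
  shows "phi1 r1 r2 r3 L (w / L) =
    (if w = 0 then 1 else if w < L then sin (k * w + C3) / sin C3
     else (sin (k * L + C3) + k * cos (k * L + C3) * (w - L)) / sin C3)"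
proof -
  have "L * k * (w / L) = k * w" and "L * (w / L - 1) = w - L"
    using L by (simp_all add: field_simps)
  moreover have "w / L \<le> 0 \<longleftrightarrow> w = 0" and "w / L < 1 \<longleftrightarrow> w < L"
    using L w by (auto simp: divide_le_0_iff)
  ultimately show ?thesis
    using LL r13 by (simp add: phi1_def phi_case2_def Let_def mult.commute mult.left_commute
        flip: k_def C3_def)
qed

lemma phi1_profile_case2:
  assumes L: "0 < L" and r2_gt: "max r1 r3 < r2" and LL: "L \<le> Lbar r1 r2 r3" and r13: "r1 < r3"
  shows "\<exists>g1 g1' g2 g2'. phi1_profile r1 r2 r3 L (lambda1 r1 r2 r3 L) g1 g1' g2 g2'"
proof -
  define k where "k = sqrt (r2 - r3)"
  define \<rho> where "\<rho> = sqrt ((r3 - r1) / (r2 - r3))"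
  define C3 where "C3 = C3_of \<rho>"
  have l: "lambda1 r1 r2 r3 L = - r3" using LL r13 by (simp add: lambda1_def max_def)
  have k: "0 < k" "k\<^sup>2 = r2 - r3" "0 < k * L" using r2_gt L by (simp_all add: k_def)
  have "0 < \<rho>" using r2_gt r13 by (simp add: \<rho>_def)
  note C3 = C3_of_bounds[OF this, folded C3_def]
  have angle: "k * L + C3 \<le> pi / 2"
    using angle_le_if_L_le_Lbar[of r1 r3 r2 L] r13 r2_gt LL
    by (simp add: max_def k_def C3_def \<rho>_def mult.commute)
  define a where "a = 1 / sin C3"
  have a: "0 < a" "a * sin C3 = 1" using C3(3) by (simp_all add: a_def)
  have "junction_profile r2 r3 (- r3) L (\<lambda>w. a * sin (k * w + C3)) (\<lambda>w. a * k * cos (k * w + C3))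
      (\<lambda>w. a * sin (k * L + C3) + a * k * cos (k * L + C3) * (w - L)) (\<lambda>_. a * k * cos (k * L + C3))"
  proof (rule junction_profile_sin_affine)
    show "0 \<le> k * cos (k * L + C3)"
      using angle k C3(1) by (auto intro!: mult_nonneg_nonneg cos_ge_zero)
  qed (use a k angle C3 in auto)
  moreover have "a * k * cos (k * 0 + C3) \<le> sqrt (- (- r3) - r1)"
  proof -
    have "a * k * cos C3 = k * \<rho> * (a * sin C3)" using C3(4) by simp
    then show ?thesis using a(2) r2_gt r13 by (simp add: k_def \<rho>_def real_sqrt_mult[symmetric])
  qed
  moreover have "phi1 r1 r2 r3 L (w / L) = (if w < L then a * sin (k * w + C3)
      else a * sin (k * L + C3) + a * k * cos (k * L + C3) * (w - L))" if "0 \<le> w" for w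
    using phi1_eq_case2[OF L LL r13 that, folded k_def \<rho>_def, folded C3_def] a L
    by (simp add: a_def add_divide_distrib)
  ultimately show ?thesis unfolding phi1_profile_def l by blast
qed

lemma phi1_eq_case3:
  assumes L: "0 < L" and LL: "L \<le> Lbar r1 r2 r3" and r13: "\<not> r1 < r3" and w: "0 \<le> w"
  defines "k \<equiv> sqrt (r2 - r1)" and "q \<equiv> sqrt (r1 - r3)"
    and "C3 \<equiv> C3_of (sqrt ((r1 - r3) / (r2 - r1)))"
  assumes nz: "sin C3 \<noteq> 0" "sin (k * L + C3) \<noteq> 0"
  shows "phi1 r1 r2 r3 L (w / L) =
    (if w < L then sin (- k * w + (k * L + C3)) / sin (k * L + C3)
     else sin C3 / sin (k * L + C3) * exp (- q * (w - L)))"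
proof -
  have "L * k * (1 - w / L) + C3 = - k * w + (k * L + C3)" and "L * q * (1 - w / L) = - q * (w - L)"
    using L by (simp_all add: field_simps)
  moreover have "1 - w / L \<le> 0 \<longleftrightarrow> L \<le> w" and "1 - w / L < 1 \<longleftrightarrow> w \<noteq> 0"
    using L w by (auto simp: field_simps)
  moreover have "phi_case2 r3 r2 r1 L 1 = sin (k * L + C3) / sin C3"
    by (simp add: phi_case2_def Let_def mult.commute flip: k_def C3_def)
  ultimately show ?thesis
    using LL r13 nz by (simp add: phi1_def phi_case2_def Let_def flip: k_def q_def C3_def)
      (simp add: algebra_simps)
qed

lemma phi1_profile_case3:
  assumes L: "0 < L" and r2_gt: "max r1 r3 < r2" and LL: "L \<le> Lbar r1 r2 r3" and r13: "\<not> r1 < r3"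
  shows "\<exists>g1 g1' g2 g2'. phi1_profile r1 r2 r3 L (lambda1 r1 r2 r3 L) g1 g1' g2 g2'"
proof -
  define k where "k = sqrt (r2 - r1)"
  define q where "q = sqrt (r1 - r3)"
  define \<rho> where "\<rho> = sqrt ((r1 - r3) / (r2 - r1))"
  define C3 where "C3 = C3_of \<rho>"
  have "r1 \<noteq> r3" using LL L by (auto simp: Lbar_def)
  then have r31: "r3 < r1" using r13 by simp
  have l: "lambda1 r1 r2 r3 L = - r1" using LL r31 by (simp add: lambda1_def max_def)
  have k: "0 < k" "k\<^sup>2 = r2 - r1" "0 < k * L" using r2_gt L by (simp_all add: k_def)
  have q: "q\<^sup>2 = r1 - r3" "k * \<rho> = q"
    using r31 r2_gt by (simp_all add: q_def k_def \<rho>_def real_sqrt_mult[symmetric])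
  have "0 < \<rho>" using r2_gt r31 by (simp add: \<rho>_def)
  note C3 = C3_of_bounds[OF this, folded C3_def]
  have angle: "k * L + C3 \<le> pi / 2"
    using angle_le_if_L_le_Lbar[of r1 r3 r2 L] r31 r2_gt LL
    by (simp add: max_def k_def C3_def \<rho>_def mult.commute)
  then have S: "0 < sin (k * L + C3)" "0 \<le> cos (k * L + C3)"
    using k(3) C3(1) by (auto intro!: sin_gt_zero cos_ge_zero)
  define a where "a = 1 / sin (k * L + C3)"
  have a: "0 < a" "a * sin (k * L + C3) = 1" using S by (simp_all add: a_def)
  have "junction_profile r2 r3 (- r1) L
      (\<lambda>w. a * sin (- k * w + (k * L + C3))) (\<lambda>w. a * - k * cos (- k * w + (k * L + C3)))
      (\<lambda>w. a * sin (- k * L + (k * L + C3)) * exp (- q * (w - L)))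
      (\<lambda>w. a * sin (- k * L + (k * L + C3)) * - q * exp (- q * (w - L)))"
  proof (rule junction_profile_sin_exp)
    have "k * cos C3 = q * sin C3" unfolding C3(4) q(2)[symmetric] by (simp add: ac_simps)
    then show "- q * sin (- k * L + (k * L + C3)) \<le> - k * cos (- k * L + (k * L + C3))" by simp
  qed (use a k q angle C3 in auto)
  moreover have "a * - k * cos (- k * 0 + (k * L + C3)) \<le> sqrt (- (- r1) - r1)"
    using a(1) k(1) S(2) by (simp add: mult_nonneg_nonneg)
  moreover have "phi1 r1 r2 r3 L (w / L) = (if w < L then a * sin (- k * w + (k * L + C3))
      else a * sin (- k * L + (k * L + C3)) * exp (- q * (w - L)))" if "0 \<le> w" for w
    using phi1_eq_case3[OF L LL r13 that, folded k_def q_def \<rho>_def, folded C3_def] C3(3) S(1)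
    by (simp add: a_def)
  ultimately show ?thesis unfolding phi1_profile_def l by blast
qed

lemma lam_root: "4 * r1 \<le> c\<^sup>2 \<Longrightarrow> (lam r1 c)\<^sup>2 + r1 = lam r1 c * c"
  unfolding lam_def by (simp add: power2_eq_square field_simps)

lemma lam_pos: "0 < r1 \<Longrightarrow> 0 < c \<Longrightarrow> 0 < lam r1 c"
proof -
  assume "0 < r1" "0 < c"
  then have "sqrt (c\<^sup>2 - 4 * r1) < sqrt (c\<^sup>2)" by (intro real_sqrt_less_mono) simp
  then show ?thesis using \<open>0 < c\<close> by (simp add: lam_def)
qed

lemma lam_at_F:
  assumes "0 < a" "a\<^sup>2 \<le> 4 * r1"
  shows "lam r1 (a / 2 + 2 * r1 / a) = a / 2"
proof -
  have "(a / 2 + 2 * r1 / a)\<^sup>2 - 4 * r1 = (2 * r1 / a - a / 2)\<^sup>2"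
    using assms(1) by (simp add: power2_eq_square field_simps)
  moreover have "a / 2 \<le> 2 * r1 / a" using assms by (simp add: field_simps power2_eq_square)
  ultimately show ?thesis by (simp add: lam_def)
qed

lemma lam_at_KPP: "0 \<le> r1 \<Longrightarrow> lam r1 (2 * sqrt r1) = sqrt r1"
  by (simp add: lam_def power_mult_distrib)

lemma speed_branches:
  assumes r1: "0 < r1" and a: "0 < a" and s0: "0 \<le> s0" and gap: "4 * r1 < a\<^sup>2 + 4 * a * s0"
    and c: "c = (if a < 2 * sqrt r1 then a / 2 + 2 * r1 / a else 2 * sqrt r1)"
  shows "2 * sqrt r1 \<le> c \<and> lam r1 c \<le> a / 2 \<and> c \<le> a + 2 * s0 \<and>
    lam r1 c * (a + 2 * s0 - c) \<le> a\<^sup>2 / 4 + a * s0 - r1"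
proof -
  define t where "t = sqrt r1"
  have t: "0 < t" "t\<^sup>2 = r1" using r1 by (auto simp: t_def)
  show ?thesis
  proof (cases "a < 2 * t")
    case True
    then have "a\<^sup>2 \<le> 4 * r1" using a t by (metis less_le power_mono power_mult_distrib four_x_squared)
    moreover have c_F: "c = a / 2 + 2 * r1 / a" using True c by (simp add: t_def)
    ultimately have lc: "lam r1 c = a / 2" using a lam_at_F by simp
    have "c - 2 * t = (a - 2 * t)\<^sup>2 / (2 * a)"
      using a t(2) by (simp add: c_F power2_eq_square field_simps)
    moreover have "0 \<le> (a - 2 * t)\<^sup>2 / (2 * a)" using a by simp
    moreover have "2 * r1 / a < a / 2 + 2 * s0" using gap a by (simp add: field_simps power2_eq_square)
    moreover have "a / 2 * (a + 2 * s0 - c) = a\<^sup>2 / 4 + a * s0 - r1"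
      using a by (simp add: c_F power2_eq_square field_simps)
    ultimately show ?thesis unfolding lc t_def[symmetric] using c_F by (intro conjI; linarith)
  next
    case False
    have c_K: "c = 2 * t" using False c by (simp add: t_def)
    have lc: "lam r1 c = t" using lam_at_KPP[of r1] r1 by (simp add: c_K t_def)
    have "t * (a + 2 * s0 - c) = a\<^sup>2 / 4 + a * s0 - r1 - ((a / 2 - t)\<^sup>2 + s0 * (a - 2 * t))"
      using t(2) by (simp add: c_K power2_eq_square algebra_simps)
    moreover have "0 \<le> (a / 2 - t)\<^sup>2 + s0 * (a - 2 * t)" using False s0 by simp
    ultimately show ?thesis unfolding lc t_def[symmetric] using False c_K s0 by (intro conjI; linarith)
  qed
qed

lemma speed_params:
  assumes r1: "0 < r1" and l: "l \<le> - r1" and cA: "2 * sqrt (- l) < cA"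
    and c: "c = (if cA < 2 * sqrt r1 + 2 * sqrt (- l - r1)
                 then (cA - 2 * sqrt (- l - r1)) / 2 + 2 * r1 / (cA - 2 * sqrt (- l - r1))
                 else 2 * sqrt r1)"
  shows "0 < lam r1 c" and "(lam r1 c)\<^sup>2 + r1 \<le> lam r1 c * c" and "c \<le> cA"
    and "lam r1 c * (cA - c) \<le> cA\<^sup>2 / 4 + l" and "sqrt (- l - r1) \<le> cA / 2 - lam r1 c"
proof -
  define s0 where "s0 = sqrt (- l - r1)"
  define a where "a = cA - 2 * s0"
  have s0: "0 \<le> s0" "s0\<^sup>2 = - l - r1" using l by (auto simp: s0_def)
  have "s0 < sqrt (- l)" using r1 by (simp add: s0_def)
  then have a: "0 < a" using cA by (simp add: a_def)
  have "(2 * sqrt (- l))\<^sup>2 < cA\<^sup>2" using cA l r1 by (intro power_strict_mono) auto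
  moreover have "(2 * sqrt (- l))\<^sup>2 = 4 * (- l)" using l r1 by (simp add: power_mult_distrib)
  ultimately have "4 * (- l) < cA\<^sup>2" by simp
  then have "4 * r1 < a\<^sup>2 + 4 * a * s0"
    using s0(2) by (simp add: a_def power2_eq_square algebra_simps)
  moreover have "c = (if a < 2 * sqrt r1 then a / 2 + 2 * r1 / a else 2 * sqrt r1)"
    using c by (simp add: a_def s0_def algebra_simps)
  ultimately have key: "2 * sqrt r1 \<le> c \<and> lam r1 c \<le> a / 2 \<and> c \<le> a + 2 * s0 \<and>
      lam r1 c * (a + 2 * s0 - c) \<le> a\<^sup>2 / 4 + a * s0 - r1"
    using speed_branches[OF r1 a s0(1)] by blast
  have cA_eq: "cA = a + 2 * s0" and l_eq: "cA\<^sup>2 / 4 + l = a\<^sup>2 / 4 + a * s0 - r1"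
    using s0(2) by (simp_all add: a_def power2_eq_square field_simps)
  have "4 * r1 \<le> c\<^sup>2"
    using key r1 power_mono[of "2 * sqrt r1" c 2] by (simp add: power_mult_distrib)
  then show "(lam r1 c)\<^sup>2 + r1 \<le> lam r1 c * c" by (simp add: lam_root)
  show "0 < lam r1 c" using key r1 by (intro lam_pos) (auto intro: less_le_trans[of 0 "2 * sqrt r1"])
  show "c \<le> cA" "lam r1 c * (cA - c) \<le> cA\<^sup>2 / 4 + l" using key cA_eq l_eq by auto
  show "sqrt (- l - r1) \<le> cA / 2 - lam r1 c" using key cA_eq unfolding s0_def[symmetric] by linarith
qed

lemma phi1_profile_exists:
  assumes "0 < L" "max r1 r3 < r2"
  shows "\<exists>g1 g1' g2 g2'. phi1_profile r1 r2 r3 L (lambda1 r1 r2 r3 L) g1 g1' g2 g2'"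
proof (cases "Lbar r1 r2 r3 < L")
  case False
  then show ?thesis
    using phi1_profile_case2[OF assms] phi1_profile_case3[OF assms] by (cases "r1 < r3") auto
qed (rule phi1_profile_case1[OF assms])

lemma lambda1_le_neg_max:
  assumes "0 < L" "max r1 r3 < r2"
  shows "lambda1 r1 r2 r3 L \<le> - max r1 r3"
proof (cases "Lbar r1 r2 r3 < L")
  case True
  then show ?thesis using eigen_eq_lambda1[OF assms True] by (simp add: eigen_eq_def)
qed (simp add: lambda1_def)

lemma ubar_eq_front:
  assumes "\<forall>w\<ge>0. phi1 r1 r2 r3 L (w / L) = (if w < L then g1 w else g2 w)"
  shows "ubar r1 r2 r3 L cA t x =
    front (speed_c r1 r2 r3 L cA) cA (lam r1 (speed_c r1 r2 r3 L cA)) g1 g2 L t x"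
  using assms unfolding ubar_def front_def Let_def by auto

theorem lemma3p6:
  fixes r1 r2 r3 L M cA B tau T :: real
    and A :: "real \<Rightarrow> real"
    and r :: "real \<Rightarrow> real \<Rightarrow> real"
    and f :: "real \<Rightarrow> real \<Rightarrow> real \<Rightarrow> real"
  assumes pos: "r1 > 0" "r2 > 0" "r3 > 0" "L > 0" "M > 0"
    and r2_gt: "r2 > max r1 r3"
    and cA_gt: "cA > 2 * sqrt (- lambda1 r1 r2 r3 L)"
    and B_nonneg: "B \<ge> 0" and tau_nonneg: "tau \<ge> 0" and T_pos: "T > 0"
    and A_cont: "continuous_on UNIV A" and A_nonneg: "\<forall>t. A t \<ge> 0"
    and A_lin: "\<forall>t\<in>{tau..<tau + T}. A t = cA * (t - tau) + B"
    and r_def: "\<forall>t x. r t x = (if x < A t then r1 else if x < A t + L then r2 else r3)"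
    and f_bdd: "\<forall>K. \<exists>Bd. \<forall>t x u. \<bar>u\<bar> \<le> K \<longrightarrow> \<bar>f t x u\<bar> \<le> Bd"
    and f_C2: "\<forall>t x. \<exists>f1 f2. (\<forall>u. (f t x has_real_derivative f1 u) (at u) \<and>
                                   (f1 has_real_derivative f2 u) (at u)) \<and>
                             continuous_on UNIV f2"
    and f_zero: "\<forall>t x. f t x 0 = 0"
    and f_deriv0: "\<forall>t x. (f t x has_real_derivative r t x) (at 0)"
    and f_kpp: "\<forall>t x u. u \<ge> 0 \<longrightarrow> r t x * u \<ge> f t x u \<and> f t x u \<ge> r t x * u - M * u ^ 2"
    and f_neg: "\<forall>t x u. u > 1 \<longrightarrow> f t x u < 0"
  shows "\<forall>C\<ge>1. gen_supersolution f tau T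
           (\<lambda>t x. C * ubar r1 r2 r3 L cA (t - tau) (x - B))"
proof (intro allI impI)
  fix C :: real assume C: "C \<ge> 1"
  define l where "l = lambda1 r1 r2 r3 L"
  define c where "c = speed_c r1 r2 r3 L cA"
  obtain g1 g1' g2 g2' where prof: "phi1_profile r1 r2 r3 L l g1 g1' g2 g2'"
    using phi1_profile_exists[OF pos(4) r2_gt] unfolding l_def by blast
  have "l \<le> - r1" using lambda1_le_neg_max[OF pos(4) r2_gt] by (simp add: l_def)
  note speed = speed_params[OF pos(1) this cA_gt[folded l_def], of c]
  interpret front_supersolution r1 r2 r3 l L c cA "lam r1 c" C tau B g1 g1' g2 g2'
    using prof speed pos(4) C
    by unfold_locales (auto simp: phi1_profile_def c_def speed_c_def Ffun_def l_def)
  have repr: "\<forall>w\<ge>0. phi1 r1 r2 r3 L (w / L) = (if w < L then g1 w else g2 w)"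
    using prof by (simp add: phi1_profile_def)
  have "U = (\<lambda>t x. C * ubar r1 r2 r3 L cA (t - tau) (x - B))"
    unfolding fun_eq_iff U_def by (simp add: ubar_eq_front[OF repr] c_def)
  moreover have "gen_supersolution f tau T U"
  proof (rule gen_supersolution_U)
    fix t x u :: real assume t: "t \<in> {tau..<tau + T}" and "0 \<le> u"
    then have "f t x u \<le> r t x * u" using f_kpp by blast
    moreover have "r t x = (if x < \<gamma>2 t then r1 else if x < \<gamma>3 t then r2 else r3)"
      using r_def A_lin t by (simp add: \<gamma>2_def \<gamma>3_def add.commute)
    ultimately show "f t x u \<le> (if x < \<gamma>2 t then r1 else if x < \<gamma>3 t then r2 else r3) * u"
      by simp
  qed (use f_neg in auto)
  ultimately show "gen_supersolution f tau T (\<lambda>t x. C * ubar r1 r2 r3 L cA (t - tau) (x - B))"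
    by simp
qed

end
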